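(* Consider a linear $L$-layer MPNN trained by gradient flow on a dataset $\{(G_i,\mathbf{X}_i,y_i)\}_{i=1}^k$ that is separable, i.e. there is $\bar{\mathbf{u}}\in\mathbb{R}^d$ with $y_i\,\bar{\mathbf{u}}^\top\mathbf{X}_i\mathbf{A}'(G_i)^L\mathbf{1}_{n_i}>0$ for all $i$. Suppose the loss $\ell:\mathbb{R}\to\mathbb{R}_{>0}$ has a continuous derivative with $\ell'(x)<0$ for all $x$, $\lim_{x\to-\infty}\ell(x)=\infty$ and $\lim_{x\to\infty}\ell(x)=0$, and that the initialisation satisfies $\mathcal{R}(\mathbf{W}(0))<\mathcal{R}(0)=\ell(0)$. For each $j$, let $\mathbf{u}_j(t)\in\mathbb{R}^{d_j}$ and $\mathbf{v}_j(t)\in\mathbb{R}^{d_{j-1}}$ be left and right singular vectors of $\mathbf{W}^{(j)}(t)$ for its largest singular value. Then: (i) for every $j=1,\dots,L$, $\lim_{t\to\infty}\big\|\mathbf{W}^{(j)}(t)/\|\mathbf{W}^{(j)}(t)\|_F-\mathbf{u}_j(t)\mathbf{v}_j(t)^\top\big\|_F=0$; (ii) $\lim_{t\to\infty}\Big|\Big\langle\dfrac{(\mathbf{W}^{(L)}(t)\cdots\mathbf{W}^{(1)}(t))^\top}{\prod_{j=1}^L\|\mathbf{W}^{(j)}(t)\|_F},\mathbf{v}_1(t)\Big\rangle\Big|=1$.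
   Context: For a graph $G$ on $n$ vertices, $\mathbf{A}(G)\in\{0,1\}^{n\times n}$ is its adjacency matrix, $\mathbf{A}'(G)=\mathbf{A}(G)+\mathbf{I}_n$, and $\mathbf{1}_n$ the all-ones vector. Training data: graphs $G_i$ on $n_i$ vertices, node feature matrices $\mathbf{X}_i\in\mathbb{R}^{d\times n_i}$ (columns = vertex features), labels $y_i\in\{-1,+1\}$; $\mathbf{Z}_i=y_i\mathbf{X}_i$. The linear MPNN has weights $\mathbf{W}=(\mathbf{W}^{(L)},\dots,\mathbf{W}^{(1)})$, $\mathbf{W}^{(j)}\in\mathbb{R}^{d_j\times d_{j-1}}$, $d_0=d$, $d_L=1$, and predicts $\hat y=\mathbf{W}^{(L)}\cdots\mathbf{W}^{(1)}\mathbf{X}\mathbf{A}'(G)^L\mathbf{1}_n$. The empirical risk is $\mathcal{R}(\mathbf{W})=\frac1k\sum_{i=1}^k\ell\big(\mathbf{W}^{(L)}\cdots\mathbf{W}^{(1)}\mathbf{Z}_i\mathbf{A}'(G_i)^L\mathbf{1}_{n_i}\big)$, and $\mathcal{R}(0)$ denotes its value at all-zero weights. Gradient flow: $\mathbf{W}(t)$, $t\ge0$, with $\frac{d\mathbf{W}(t)}{dt}=-\nabla\mathcal{R}(\mathbf{W}(t))$ from the initial state $\mathbf{W}(0)$. $\|\cdot\|_F$ is the Frobenius norm. *)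

theory Defs
  imports "HOL-Analysis.Analysis" "Jordan_Normal_Form.Matrix"
begin

definition simple_graph :: "nat \<Rightarrow> (nat \<Rightarrow> nat \<Rightarrow> bool) \<Rightarrow> bool" where
  "simple_graph n E \<longleftrightarrow> (\<forall>a b. E a b \<longrightarrow> a < n \<and> b < n \<and> a \<noteq> b \<and> E b a)"

definition adj_mat :: "nat \<Rightarrow> (nat \<Rightarrow> nat \<Rightarrow> bool) \<Rightarrow> real mat" where
  "adj_mat n E = mat n n (\<lambda>(a,b). if E a b then 1 else 0)"

definition adj_mat' :: "nat \<Rightarrow> (nat \<Rightarrow> nat \<Rightarrow> bool) \<Rightarrow> real mat" where
  "adj_mat' n E = adj_mat n E + 1\<^sub>m n"

definition ones_vec :: "nat \<Rightarrow> real vec" where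
  "ones_vec n = vec n (\<lambda>_. 1)"

definition agg_feat :: "nat \<Rightarrow> nat \<Rightarrow> (nat \<Rightarrow> nat \<Rightarrow> bool) \<Rightarrow> real mat \<Rightarrow> real vec" where
  "agg_feat L n E X = (X * (adj_mat' n E ^\<^sub>m L)) *\<^sub>v ones_vec n"

fun prod_layers :: "(nat \<Rightarrow> nat) \<Rightarrow> (nat \<Rightarrow> real mat) \<Rightarrow> nat \<Rightarrow> real mat" where
  "prod_layers d Ws 0 = 1\<^sub>m (d 0)"
| "prod_layers d Ws (Suc j) = Ws (Suc j) * prod_layers d Ws j"

definition weights_dims :: "nat \<Rightarrow> (nat \<Rightarrow> nat) \<Rightarrow> (nat \<Rightarrow> real mat) \<Rightarrow> bool" where
  "weights_dims L d Ws \<longleftrightarrow> (\<forall>j\<in>{1..L}. Ws j \<in> carrier_mat (d j) (d (j - 1)))"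

definition zero_weights :: "(nat \<Rightarrow> nat) \<Rightarrow> nat \<Rightarrow> real mat" where
  "zero_weights d j = 0\<^sub>m (d j) (d (j - 1))"

text \<open>Empirical risk R(W) = 1/k sum_i loss(W^(L)...W^(1) Z_i A'(G_i)^L 1), with
  Z_i = y_i X_i.  The scalar output is the unique entry of the 1-dimensional vector.\<close>
definition risk ::
  "(real \<Rightarrow> real) \<Rightarrow> nat \<Rightarrow> (nat \<Rightarrow> nat) \<Rightarrow> nat \<Rightarrow> (nat \<Rightarrow> nat)
   \<Rightarrow> (nat \<Rightarrow> nat \<Rightarrow> nat \<Rightarrow> bool) \<Rightarrow> (nat \<Rightarrow> real mat) \<Rightarrow> (nat \<Rightarrow> real)
   \<Rightarrow> (nat \<Rightarrow> real mat) \<Rightarrow> real" where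
  "risk loss L d k n G X y Ws =
     (1 / real k) * (\<Sum>i<k. loss ((prod_layers d Ws L *\<^sub>v agg_feat L (n i) (G i) (y i \<cdot>\<^sub>m X i)) $ 0))"

definition upd_entry :: "(nat \<Rightarrow> real mat) \<Rightarrow> nat \<Rightarrow> nat \<Rightarrow> nat \<Rightarrow> real \<Rightarrow> nat \<Rightarrow> real mat" where
  "upd_entry Ws j a b x =
     Ws(j := mat (dim_row (Ws j)) (dim_col (Ws j)) (\<lambda>(p,q). if (p,q) = (a,b) then x else Ws j $$ (p,q)))"

definition grad_entry :: "((nat \<Rightarrow> real mat) \<Rightarrow> real) \<Rightarrow> (nat \<Rightarrow> real mat) \<Rightarrow> nat \<Rightarrow> nat \<Rightarrow> nat \<Rightarrow> real" where
  "grad_entry F Ws j a b = deriv (\<lambda>x. F (upd_entry Ws j a b x)) (Ws j $$ (a,b))"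

definition gradient_flow ::
  "nat \<Rightarrow> (nat \<Rightarrow> nat) \<Rightarrow> ((nat \<Rightarrow> real mat) \<Rightarrow> real) \<Rightarrow> (real \<Rightarrow> nat \<Rightarrow> real mat) \<Rightarrow> bool" where
  "gradient_flow L d F W \<longleftrightarrow>
     (\<forall>t\<ge>0. weights_dims L d (W t)) \<and>
     (\<forall>t\<ge>0. \<forall>j\<in>{1..L}. \<forall>a<d j. \<forall>b<d (j - 1).
        ((\<lambda>s. W s j $$ (a,b)) has_real_derivative (- grad_entry F (W t) j a b)) (at t within {0..}))"

definition vnorm :: "real vec \<Rightarrow> real" where
  "vnorm v = sqrt (v \<bullet> v)"

definition frob_norm :: "real mat \<Rightarrow> real" where
  "frob_norm M = sqrt (\<Sum>a<dim_row M. \<Sum>b<dim_col M. (M $$ (a,b))^2)"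

definition outer_prod :: "real vec \<Rightarrow> real vec \<Rightarrow> real mat" where
  "outer_prod u v = mat (dim_vec u) (dim_vec v) (\<lambda>(a,b). u $ a * v $ b)"

definition singular_triple :: "real mat \<Rightarrow> real \<Rightarrow> real vec \<Rightarrow> real vec \<Rightarrow> bool" where
  "singular_triple M \<sigma> u v \<longleftrightarrow>
     \<sigma> \<ge> 0 \<and> u \<in> carrier_vec (dim_row M) \<and> v \<in> carrier_vec (dim_col M) \<and>
     vnorm u = 1 \<and> vnorm v = 1 \<and>
     M *\<^sub>v v = \<sigma> \<cdot>\<^sub>v u \<and> transpose_mat M *\<^sub>v u = \<sigma> \<cdot>\<^sub>v v"

definition top_singular_vectors :: "real mat \<Rightarrow> real vec \<Rightarrow> real vec \<Rightarrow> bool" where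
  "top_singular_vectors M u v \<longleftrightarrow>
     (\<exists>\<sigma>. singular_triple M \<sigma> u v \<and> (\<forall>\<tau> u' v'. singular_triple M \<tau> u' v' \<longrightarrow> \<tau> \<le> \<sigma>))"

end

(*
  Balancedness: along the gradient flow, W(j+1)^T W(j+1) - W(j) W(j)^T stays constant, so all
  squared layer norms |W(j)|_F^2 differ from |W(L)|_F^2 by constants.  Since the risk starts
  below l(0) and decreases, some margin stays bounded away from 0; with the separating direction
  this bounds the gradient from below as long as the norms are bounded, and since the risk is
  nonnegative and decreases at rate |grad R|^2, the norms must diverge.

  The last layer is a row vector, so its top singular value equals its norm.  Balancedness
  propagates this downwards: sigma_j^2 >= |W(j)|_F^2 - C for every layer, which gives (i) after
  dividing by the diverging norms, and also forces the top left singular vector u_j to align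
  with v_(j+1).  Chaining these alignments through the normalised product W(L)...W(1) v_1
  gives (ii).

  The data enter only through the vectors z_i = y_i X_i A'(G_i)^L 1, so the argument is carried
  out for a deep linear network with inputs z_i.
*)
theory Submission
  imports Defs
begin

section \<open>Coordinate vectors\<close>

definition sqnorm :: "nat \<Rightarrow> (nat \<Rightarrow> real) \<Rightarrow> real" where
  "sqnorm n x = (\<Sum>i<n. (x i)^2)"

definition frob_sq :: "nat \<Rightarrow> nat \<Rightarrow> (nat \<Rightarrow> nat \<Rightarrow> real) \<Rightarrow> real" where
  "frob_sq r c w = (\<Sum>a<r. \<Sum>b<c. (w a b)^2)"

lemma sqnorm_nonneg: "sqnorm n x \<ge> 0"
  unfolding sqnorm_def by (simp add: sum_nonneg)

lemma frob_sq_nonneg: "frob_sq r c w \<ge> 0"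
  unfolding frob_sq_def by (simp add: sum_nonneg)

lemma sqnorm_scale: "sqnorm n (\<lambda>i. s * x i) = s^2 * sqnorm n x"
  unfolding sqnorm_def by (simp add: power_mult_distrib sum_distrib_left)

lemma sqnorm_eq_0_iff: "sqnorm n x = 0 \<longleftrightarrow> (\<forall>i<n. x i = 0)"
  unfolding sqnorm_def by (subst sum_nonneg_eq_0_iff) auto

lemma sqnorm_unit_coord:
  assumes "j < n" shows "sqnorm n (\<lambda>i. if i = j then 1 else 0) = 1"
proof -
  have "(\<Sum>i<n. (if i = j then 1 else 0 :: real)^2) = (\<Sum>i<n. if i = j then 1 else 0)"
    by (rule sum.cong) auto
  thus ?thesis unfolding sqnorm_def using assms by simp
qed

lemma coord_sq_le_sqnorm: "i < n \<Longrightarrow> (x i)^2 \<le> sqnorm n x"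
  unfolding sqnorm_def by (intro member_le_sum) auto

lemma cauchy_schwarz_sqnorm: "(\<Sum>i<n. x i * y i)^2 \<le> sqnorm n x * sqnorm n y"
  unfolding sqnorm_def by (rule Cauchy_Schwarz_ineq_sum)

lemma abs_inner_le_sqnorm: "\<bar>\<Sum>i<n. x i * y i\<bar> \<le> sqrt (sqnorm n x) * sqrt (sqnorm n y)"
  using real_sqrt_le_mono[OF cauchy_schwarz_sqnorm[where x=x and y=y and n=n]]
  by (simp add: real_sqrt_mult)

lemma abs_inner_le_1: "sqnorm n x \<le> 1 \<Longrightarrow> sqnorm n y = 1 \<Longrightarrow> \<bar>\<Sum>i<n. x i * y i\<bar> \<le> 1"
  using abs_inner_le_sqnorm[where x=x and y=y and n=n] by (simp add: order_trans)

lemma sqnorm_apply_le_frob_sq: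
  "sqnorm r (\<lambda>a. \<Sum>b<c. w a b * x b) \<le> frob_sq r c w * sqnorm c x"
proof -
  have "sqnorm r (\<lambda>a. \<Sum>b<c. w a b * x b) \<le> (\<Sum>a<r. sqnorm c (w a) * sqnorm c x)"
    unfolding sqnorm_def[of r] by (intro sum_mono cauchy_schwarz_sqnorm)
  thus ?thesis by (simp add: frob_sq_def sqnorm_def sum_distrib_right)
qed

lemma sqnorm_tapply_le_frob_sq:
  "sqnorm c (\<lambda>b. \<Sum>a<r. w a b * y a) \<le> frob_sq r c w * sqnorm r y"
  using sqnorm_apply_le_frob_sq[where r=c and c=r and w="\<lambda>b a. w a b" and x=y]
  by (simp add: frob_sq_def sum.swap[of _ "{..<c}"])

lemma sqnorm_apply_eq_quadratic_form:
  "sqnorm m (\<lambda>c. \<Sum>a<r. f c a * x a) = (\<Sum>a<r. \<Sum>b<r. x a * x b * (\<Sum>c<m. f c a * f c b))"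
proof -
  have "sqnorm m (\<lambda>c. \<Sum>a<r. f c a * x a) = (\<Sum>c<m. \<Sum>a<r. \<Sum>b<r. x a * x b * (f c a * f c b))"
    unfolding sqnorm_def power2_eq_square by (simp add: sum_product algebra_simps)
  also have "\<dots> = (\<Sum>a<r. \<Sum>b<r. \<Sum>c<m. x a * x b * (f c a * f c b))"
    by (subst sum.swap) (simp add: sum.swap[of _ "{..<m}"])
  finally show ?thesis by (simp add: sum_distrib_left)
qed

lemma abs_quadratic_form_le:
  assumes "sqnorm r x \<le> 1"
  shows "\<bar>\<Sum>a<r. \<Sum>b<r. x a * x b * D a b\<bar> \<le> (\<Sum>a<r. \<Sum>b<r. \<bar>D a b\<bar>)"
proof -
  have x: "\<bar>x a\<bar> \<le> 1" if "a < r" for a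
    using coord_sq_le_sqnorm[OF that, of x] assms by (metis abs_square_le_1 order_trans)
  have "\<bar>\<Sum>a<r. \<Sum>b<r. x a * x b * D a b\<bar> \<le> (\<Sum>a<r. \<Sum>b<r. \<bar>x a * x b * D a b\<bar>)"
    by (rule order_trans[OF sum_abs]) (intro sum_mono sum_abs)
  also have "\<dots> \<le> (\<Sum>a<r. \<Sum>b<r. \<bar>D a b\<bar>)"
    using x by (intro sum_mono) (simp add: abs_mult mult_le_one mult_left_le_one_le)
  finally show ?thesis .
qed

text \<open>Split \<open>x\<close> into its component along \<open>u\<close> and a rest orthogonal to \<open>u\<close>.\<close>
lemma abs_inner_ge_via_unit:
  assumes x: "sqnorm n x \<le> 1" and u: "sqnorm n u = 1" and y: "sqnorm n y = 1"
  shows "\<bar>\<Sum>i<n. x i * y i\<bar> \<ge> \<bar>\<Sum>i<n. x i * u i\<bar> * \<bar>\<Sum>i<n. u i * y i\<bar> - sqrt (1 - (\<Sum>i<n. x i * u i)^2)"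
proof -
  define \<beta> where "\<beta> = (\<Sum>i<n. x i * u i)"
  define e where "e i = x i - \<beta> * u i" for i
  have split: "(\<Sum>i<n. x i * y i) = \<beta> * (\<Sum>i<n. u i * y i) + (\<Sum>i<n. e i * y i)"
    unfolding e_def by (simp add: algebra_simps sum_subtractf sum_distrib_left)
  have "sqnorm n e = (\<Sum>i<n. (x i)^2 - (2 * \<beta>) * (x i * u i) + \<beta>^2 * (u i)^2)"
    unfolding sqnorm_def e_def by (intro sum.cong) (simp_all add: power2_diff power_mult_distrib)
  also have "\<dots> = sqnorm n x - 2 * \<beta> * \<beta> + \<beta>^2 * sqnorm n u"
    unfolding sqnorm_def \<beta>_def by (simp add: sum.distrib sum_subtractf sum_distrib_left)
  finally have "sqnorm n e = sqnorm n x - 2 * \<beta> * \<beta> + \<beta>^2 * sqnorm n u" .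
  hence "sqnorm n e \<le> 1 - \<beta>^2" using x u by (simp add: power2_eq_square)
  hence "sqrt (sqnorm n e) \<le> sqrt (1 - \<beta>^2)" by (rule real_sqrt_le_mono)
  moreover have "\<bar>\<Sum>i<n. e i * y i\<bar> \<le> sqrt (sqnorm n e)"
    using abs_inner_le_sqnorm[where x=e and y=y and n=n] y by simp
  ultimately have "\<bar>\<Sum>i<n. e i * y i\<bar> \<le> sqrt (1 - \<beta>^2)" by linarith
  thus ?thesis unfolding split \<beta>_def[symmetric] by (simp add: abs_mult)
qed

lemma sum_mult_sum3_swap:
  fixes c :: "_ \<Rightarrow> real"
  shows "(\<Sum>i\<in>I. c i * (\<Sum>j\<in>J. \<Sum>a\<in>A j. \<Sum>b\<in>B j. f i j a b)) =
         (\<Sum>j\<in>J. \<Sum>a\<in>A j. \<Sum>b\<in>B j. \<Sum>i\<in>I. c i * f i j a b)"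
proof -
  have "(\<Sum>i\<in>I. c i * (\<Sum>j\<in>J. \<Sum>a\<in>A j. \<Sum>b\<in>B j. f i j a b)) =
        (\<Sum>i\<in>I. \<Sum>j\<in>J. \<Sum>a\<in>A j. \<Sum>b\<in>B j. c i * f i j a b)"
    by (simp add: sum_distrib_left)
  also have "\<dots> = (\<Sum>j\<in>J. \<Sum>i\<in>I. \<Sum>a\<in>A j. \<Sum>b\<in>B j. c i * f i j a b)"
    by (rule sum.swap)
  also have "\<dots> = (\<Sum>j\<in>J. \<Sum>a\<in>A j. \<Sum>i\<in>I. \<Sum>b\<in>B j. c i * f i j a b)"
    by (intro sum.cong refl) (rule sum.swap)
  also have "\<dots> = (\<Sum>j\<in>J. \<Sum>a\<in>A j. \<Sum>b\<in>B j. \<Sum>i\<in>I. c i * f i j a b)"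
    by (intro sum.cong refl) (rule sum.swap)
  finally show ?thesis .
qed

section \<open>Singular values\<close>

lemma scalar_prod_eq_sum: "w \<in> carrier_vec n \<Longrightarrow> v \<bullet> w = (\<Sum>i<n. v $ i * w $ i)"
  by (auto simp: scalar_prod_def atLeast0LessThan)

lemma mult_mat_vec_index_sum:
  "M \<in> carrier_mat r c \<Longrightarrow> v \<in> carrier_vec c \<Longrightarrow> a < r \<Longrightarrow>
   (M *\<^sub>v v) $ a = (\<Sum>b<c. M $$ (a,b) * v $ b)"
  by (auto simp: scalar_prod_def atLeast0LessThan intro!: sum.cong)

lemma transpose_mult_vec_index_sum:
  "M \<in> carrier_mat r c \<Longrightarrow> v \<in> carrier_vec r \<Longrightarrow> b < c \<Longrightarrow>
   (transpose_mat M *\<^sub>v v) $ b = (\<Sum>a<r. M $$ (a,b) * v $ a)"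
  by (auto simp: scalar_prod_def atLeast0LessThan intro!: sum.cong)

lemma vnorm_eq_1_iff: "v \<in> carrier_vec n \<Longrightarrow> vnorm v = 1 \<longleftrightarrow> sqnorm n (\<lambda>i. v $ i) = 1"
  by (auto simp: vnorm_def scalar_prod_def sqnorm_def power2_eq_square atLeast0LessThan)

lemma singular_triple_coords:
  assumes M: "M \<in> carrier_mat r c" and st: "singular_triple M \<sigma> u v"
  shows "\<sigma> \<ge> 0" "u \<in> carrier_vec r" "v \<in> carrier_vec c"
    "sqnorm r (\<lambda>i. u $ i) = 1" "sqnorm c (\<lambda>i. v $ i) = 1"
    "\<And>a. a < r \<Longrightarrow> (\<Sum>b<c. M $$ (a,b) * v $ b) = \<sigma> * u $ a"
    "\<And>b. b < c \<Longrightarrow> (\<Sum>a<r. M $$ (a,b) * u $ a) = \<sigma> * v $ b"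
proof -
  show u: "u \<in> carrier_vec r" and v: "v \<in> carrier_vec c" and "\<sigma> \<ge> 0"
    using st M unfolding singular_triple_def by auto
  show "sqnorm r (\<lambda>i. u $ i) = 1" "sqnorm c (\<lambda>i. v $ i) = 1"
    using st u v vnorm_eq_1_iff unfolding singular_triple_def by auto
  show "(\<Sum>b<c. M $$ (a,b) * v $ b) = \<sigma> * u $ a" if "a < r" for a
    using st arg_cong[of _ _ "\<lambda>x. x $ a"] mult_mat_vec_index_sum[OF M v that] that u
    unfolding singular_triple_def by auto
  show "(\<Sum>a<r. M $$ (a,b) * u $ a) = \<sigma> * v $ b" if "b < c" for b
    using st arg_cong[of _ _ "\<lambda>x. x $ b"] transpose_mult_vec_index_sum[OF M u that] that v
    unfolding singular_triple_def by auto
qed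

lemma compact_coord_box: "compact (Pi UNIV (\<lambda>i::nat. if i < c then {-1..1::real} else {0}))"
proof -
  have "compactin (product_topology (\<lambda>i. euclidean) UNIV)
          (PiE UNIV (\<lambda>i::nat. if i < c then {-1..1::real} else {0}))"
    by (subst compactin_PiE) auto
  thus ?thesis by (simp add: euclidean_product_topology PiE_def extensional_UNIV)
qed

lemma sqnorm_apply_attains_max:
  fixes w :: "nat \<Rightarrow> nat \<Rightarrow> real"
  assumes "c > 0"
  obtains x where "sqnorm c x = 1"
    "\<And>z. sqnorm c z = 1 \<Longrightarrow>
       sqnorm r (\<lambda>a. \<Sum>b<c. w a b * z b) \<le> sqnorm r (\<lambda>a. \<Sum>b<c. w a b * x b)"
proof -
  define \<phi> where "\<phi> z = sqnorm r (\<lambda>a. \<Sum>b<c. w a b * z b)" for z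
  define K where "K = Pi UNIV (\<lambda>i::nat. if i < c then {-1..1::real} else {0}) \<inter> {x. sqnorm c x = 1}"
  have "closed {x::nat\<Rightarrow>real. sqnorm c x = 1}"
    unfolding sqnorm_def
    by (intro closed_Collect_eq continuous_intros
          continuous_on_subset[OF continuous_on_product_coordinates]) auto
  hence "compact K" unfolding K_def by (intro compact_Int_closed compact_coord_box)
  moreover have "(\<lambda>i. if i = 0 then 1 else 0) \<in> K"
    using assms sqnorm_unit_coord[of 0 c] by (auto simp: K_def)
  moreover have "continuous_on K \<phi>"
    unfolding \<phi>_def sqnorm_def
    by (intro continuous_intros continuous_on_subset[OF continuous_on_product_coordinates]) auto
  ultimately obtain x where x: "x \<in> K" and max: "\<And>z. z \<in> K \<Longrightarrow> \<phi> z \<le> \<phi> x"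
    using continuous_attains_sup[of K \<phi>] by blast
  have "\<phi> z \<le> \<phi> x" if z: "sqnorm c z = 1" for z
  proof -
    define z' where "z' i = (if i < c then z i else 0)" for i
    have "\<bar>z i\<bar> \<le> 1" if "i < c" for i
      using coord_sq_le_sqnorm[OF that, of z] z by (simp add: abs_square_le_1)
    hence "z' \<in> K" using z by (auto simp: K_def z'_def sqnorm_def abs_le_iff)
    moreover have "\<phi> z' = \<phi> z" unfolding \<phi>_def z'_def by simp
    ultimately show ?thesis using max by metis
  qed
  thus ?thesis using that x unfolding K_def \<phi>_def by blast
qed

lemma sqnorm_apply_le_max:
  fixes w :: "nat \<Rightarrow> nat \<Rightarrow> real"
  assumes max: "\<And>z. sqnorm c z = 1 \<Longrightarrow>
       sqnorm r (\<lambda>a. \<Sum>b<c. w a b * z b) \<le> sqnorm r (\<lambda>a. \<Sum>b<c. w a b * x b)"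
  shows "sqnorm r (\<lambda>a. \<Sum>b<c. w a b * z b) \<le> sqnorm r (\<lambda>a. \<Sum>b<c. w a b * x b) * sqnorm c z"
proof (cases "sqnorm c z = 0")
  case True
  hence "\<forall>b<c. z b = 0" by (simp add: sqnorm_eq_0_iff)
  thus ?thesis by (simp add: sqnorm_def)
next
  case False
  define s where "s = 1 / sqrt (sqnorm c z)"
  have s: "s^2 * sqnorm c z = 1" "s \<noteq> 0"
    using False sqnorm_nonneg[of c z] by (auto simp: s_def power_divide)
  have "sqnorm r (\<lambda>a. \<Sum>b<c. w a b * (s * z b)) = s^2 * sqnorm r (\<lambda>a. \<Sum>b<c. w a b * z b)"
    by (simp add: sqnorm_scale[symmetric] sum_distrib_left mult.left_commute)
  moreover have "sqnorm c (\<lambda>b. s * z b) = 1" using s by (simp add: sqnorm_scale)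
  ultimately have "s^2 * sqnorm r (\<lambda>a. \<Sum>b<c. w a b * z b) \<le> s^2 * sqnorm c z * sqnorm r (\<lambda>a. \<Sum>b<c. w a b * x b)"
    using max[of "\<lambda>b. s * z b"] s by simp
  thus ?thesis using s by (simp add: mult.commute mult.left_commute)
qed

lemma linear_coeff_eq_0_if_nonpos:
  fixes a b :: real
  assumes "\<And>e. a * e + b * e^2 \<le> 0"
  shows "a = 0"
proof (rule ccontr)
  assume a: "a \<noteq> 0"
  define s where "s = 1 / (\<bar>b\<bar> + 1)"
  have s: "s > 0" "\<bar>b\<bar> * s < 1" unfolding s_def by (auto simp: field_simps)
  have "a^2 * s * (1 + b * s) \<le> 0"
    using assms[of "a * s"] by (simp add: algebra_simps power2_eq_square)
  moreover have "1 + b * s > 0" using s by (smt (verit) abs_ge_minus_self mult_minus_left mult_right_mono)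
  ultimately show False using a s by (simp add: mult_le_0_iff)
qed

text \<open>First-order condition at a maximiser \<open>x\<close> of \<open>\<parallel>w z\<parallel>\<^sup>2\<close> on the unit sphere:
  \<open>w\<^sup>T w x = \<parallel>w x\<parallel>\<^sup>2 x\<close>, obtained by perturbing \<open>x\<close> along a coordinate axis.\<close>
lemma sqnorm_apply_max_stationary:
  fixes w :: "nat \<Rightarrow> nat \<Rightarrow> real"
  assumes x: "sqnorm c x = 1"
    and max: "\<And>z. sqnorm r (\<lambda>a. \<Sum>b<c. w a b * z b) \<le> sqnorm r (\<lambda>a. \<Sum>b<c. w a b * x b) * sqnorm c z"
    and b0: "b0 < c"
  shows "(\<Sum>a<r. w a b0 * (\<Sum>b<c. w a b * x b)) = sqnorm r (\<lambda>a. \<Sum>b<c. w a b * x b) * x b0"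
proof -
  define A where "A a = (\<Sum>b<c. w a b * x b)" for a
  define \<mu> where "\<mu> = sqnorm r A"
  define y where "y b = (if b = b0 then 1 else (0::real))" for b
  have wy: "(\<Sum>b<c. w a b * y b) = w a b0" for a
    unfolding y_def using b0 by (simp add: if_distrib sum.delta cong: if_cong)
  have xy: "(\<Sum>b<c. x b * y b) = x b0"
    unfolding y_def using b0 by (simp add: if_distrib sum.delta cong: if_cong)
  have yy: "sqnorm c y = 1"
    unfolding y_def using b0 by (rule sqnorm_unit_coord)
  have "(2 * (\<Sum>a<r. A a * w a b0) - 2 * \<mu> * x b0) * e + (sqnorm r (\<lambda>a. w a b0) - \<mu>) * e^2 \<le> 0" for e
  proof -
    have "(\<lambda>a. \<Sum>b<c. w a b * (x b + e * y b)) = (\<lambda>a. A a + e * w a b0)"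
      unfolding A_def by (auto simp: algebra_simps sum.distrib wy[symmetric] sum_distrib_left)
    moreover have "sqnorm r (\<lambda>a. A a + e * w a b0) =
        \<mu> + 2 * e * (\<Sum>a<r. A a * w a b0) + e^2 * sqnorm r (\<lambda>a. w a b0)"
      unfolding sqnorm_def \<mu>_def
      by (simp add: power2_sum sum.distrib sum_distrib_left power_mult_distrib algebra_simps)
    moreover have "sqnorm c (\<lambda>b. x b + e * y b) = 1 + 2 * e * x b0 + e^2"
    proof -
      have "sqnorm c (\<lambda>b. x b + e * y b) = (\<Sum>b<c. (x b)^2 + (2 * e) * (x b * y b) + e^2 * (y b)^2)"
        unfolding sqnorm_def by (intro sum.cong) (auto simp: power2_sum power_mult_distrib)
      also have "\<dots> = sqnorm c x + (2 * e) * (\<Sum>b<c. x b * y b) + e^2 * sqnorm c y"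
        unfolding sqnorm_def by (simp add: sum.distrib sum_distrib_left)
      finally show ?thesis using x yy xy by simp
    qed
    ultimately show ?thesis
      using max[of "\<lambda>b. x b + e * y b"] unfolding \<mu>_def A_def
      by (simp add: algebra_simps power2_eq_square)
  qed
  hence "2 * (\<Sum>a<r. A a * w a b0) - 2 * \<mu> * x b0 = 0" by (rule linear_coeff_eq_0_if_nonpos)
  thus ?thesis unfolding A_def \<mu>_def by (simp add: mult.commute)
qed

lemma singular_triple_of_max:
  assumes M: "M \<in> carrier_mat r c" and x: "sqnorm c x = 1"
    and max: "\<And>z. sqnorm r (\<lambda>a. \<Sum>b<c. M $$ (a,b) * z b) \<le>
                   sqnorm r (\<lambda>a. \<Sum>b<c. M $$ (a,b) * x b) * sqnorm c z"
    and pos: "sqnorm r (\<lambda>a. \<Sum>b<c. M $$ (a,b) * x b) > 0"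
  defines "\<tau> \<equiv> sqrt (sqnorm r (\<lambda>a. \<Sum>b<c. M $$ (a,b) * x b))"
  shows "singular_triple M \<tau> (vec r (\<lambda>a. (\<Sum>b<c. M $$ (a,b) * x b) / \<tau>)) (vec c x)"
proof -
  define A where "A a = (\<Sum>b<c. M $$ (a,b) * x b)" for a
  define u' where "u' = vec r (\<lambda>a. A a / \<tau>)"
  define v' where "v' = vec c x"
  have \<tau>: "\<tau> > 0" "\<tau> * \<tau> = sqnorm r A" unfolding \<tau>_def A_def using pos by auto
  have u'c: "u' \<in> carrier_vec r" and v'c: "v' \<in> carrier_vec c" unfolding u'_def v'_def by auto
  have "M *\<^sub>v v' = \<tau> \<cdot>\<^sub>v u'"
  proof (rule eq_vecI)
    fix a assume "a < dim_vec (\<tau> \<cdot>\<^sub>v u')"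
    hence a: "a < r" using u'c by simp
    show "(M *\<^sub>v v') $ a = (\<tau> \<cdot>\<^sub>v u') $ a"
      using mult_mat_vec_index_sum[OF M v'c a] a \<tau> by (simp add: u'_def v'_def A_def)
  qed (use M u'c in simp)
  moreover have "transpose_mat M *\<^sub>v u' = \<tau> \<cdot>\<^sub>v v'"
  proof (rule eq_vecI)
    fix b assume "b < dim_vec (\<tau> \<cdot>\<^sub>v v')"
    hence b: "b < c" using v'c by simp
    have "(transpose_mat M *\<^sub>v u') $ b = (\<Sum>a<r. M $$ (a,b) * A a) / \<tau>"
      using transpose_mult_vec_index_sum[OF M u'c b] by (simp add: u'_def sum_divide_distrib)
    also have "\<dots> = \<tau> * x b"
      using sqnorm_apply_max_stationary[OF x max b] \<tau> unfolding A_def by (simp add: field_simps)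
    finally show "(transpose_mat M *\<^sub>v u') $ b = (\<tau> \<cdot>\<^sub>v v') $ b" using b by (simp add: v'_def)
  qed (use M v'c in simp)
  moreover have "sqnorm r (\<lambda>i. u' $ i) = sqnorm r (\<lambda>i. (1 / \<tau>) * A i)"
    unfolding sqnorm_def u'_def by simp
  hence "sqnorm r (\<lambda>i. u' $ i) = 1"
    using \<tau> sqnorm_scale[of r "1 / \<tau>" A] by (simp add: power2_eq_square flip: \<tau>(2))
  moreover have "sqnorm c (\<lambda>i. v' $ i) = 1" using x unfolding sqnorm_def v'_def by simp
  ultimately show ?thesis
    using M u'c v'c \<tau> vnorm_eq_1_iff
    unfolding singular_triple_def u'_def[symmetric] v'_def[symmetric] A_def[symmetric]
    by (auto simp: v'_def)
qed

lemma top_singular_value_bounds_apply: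
  assumes M: "M \<in> carrier_mat r c" and top: "top_singular_vectors M u v"
  obtains \<sigma> where "singular_triple M \<sigma> u v"
    "\<And>z. sqnorm r (\<lambda>a. \<Sum>b<c. M $$ (a,b) * z b) \<le> \<sigma>^2 * sqnorm c z"
proof -
  obtain \<sigma> where st: "singular_triple M \<sigma> u v"
    and largest: "\<And>\<tau> u' v'. singular_triple M \<tau> u' v' \<Longrightarrow> \<tau> \<le> \<sigma>"
    using top unfolding top_singular_vectors_def by blast
  have "sqnorm r (\<lambda>a. \<Sum>b<c. M $$ (a,b) * z b) \<le> \<sigma>^2 * sqnorm c z" for z
  proof (cases "c = 0")
    case True
    thus ?thesis by (simp add: sqnorm_def)
  next
    case False
    then obtain x where x: "sqnorm c x = 1"
      and max_sphere: "\<And>z. sqnorm c z = 1 \<Longrightarrow>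
             sqnorm r (\<lambda>a. \<Sum>b<c. M $$ (a,b) * z b) \<le> sqnorm r (\<lambda>a. \<Sum>b<c. M $$ (a,b) * x b)"
      using sqnorm_apply_attains_max[of c r "\<lambda>a b. M $$ (a,b)"] by auto
    have max: "\<And>z. sqnorm r (\<lambda>a. \<Sum>b<c. M $$ (a,b) * z b) \<le>
                   sqnorm r (\<lambda>a. \<Sum>b<c. M $$ (a,b) * x b) * sqnorm c z"
      by (rule sqnorm_apply_le_max) (rule max_sphere)
    define \<mu> where "\<mu> = sqnorm r (\<lambda>a. \<Sum>b<c. M $$ (a,b) * x b)"
    have "\<mu> \<le> \<sigma>^2"
    proof (cases "\<mu> > 0")
      case True
      have "sqrt \<mu> \<le> \<sigma>"
        using largest[OF singular_triple_of_max[OF M x max]] True unfolding \<mu>_def by simp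
      thus ?thesis using True real_sqrt_le_iff by fastforce
    next
      case False
      hence "\<mu> = 0" using sqnorm_nonneg[of r] unfolding \<mu>_def by (meson order.antisym not_less)
      thus ?thesis by simp
    qed
    thus ?thesis
      using max[of z] sqnorm_nonneg[of c z] unfolding \<mu>_def by (meson mult_right_mono order_trans)
  qed
  thus ?thesis using that st by blast
qed

lemma sqnorm_tapply_le_if_apply_le:
  fixes w :: "nat \<Rightarrow> nat \<Rightarrow> real"
  assumes apply_le: "\<And>z. sqnorm r (\<lambda>a. \<Sum>b<c. w a b * z b) \<le> s * sqnorm c z" and s: "s \<ge> 0"
  shows "sqnorm c (\<lambda>b. \<Sum>a<r. w a b * y a) \<le> s * sqnorm r y"
proof -
  define t where "t b = (\<Sum>a<r. w a b * y a)" for b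
  have "sqnorm c t = (\<Sum>a<r. y a * (\<Sum>b<c. w a b * t b))"
    unfolding sqnorm_def t_def power2_eq_square
    by (simp add: sum_distrib_left sum_distrib_right algebra_simps sum.swap[of _ "{..<c}"])
  also have "\<dots> \<le> sqrt (sqnorm r y) * sqrt (sqnorm r (\<lambda>a. \<Sum>b<c. w a b * t b))"
    using abs_inner_le_sqnorm[where x=y and y="\<lambda>a. \<Sum>b<c. w a b * t b" and n=r] by linarith
  also have "\<dots> \<le> sqrt (sqnorm r y) * sqrt (s * sqnorm c t)"
    by (intro mult_left_mono real_sqrt_le_mono apply_le) (simp add: sqnorm_nonneg)
  finally have le: "sqrt (sqnorm c t) * sqrt (sqnorm c t) \<le> sqrt (sqnorm r y * s) * sqrt (sqnorm c t)"
    using sqnorm_nonneg[of c t] by (simp add: real_sqrt_mult mult.assoc)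
  have "sqrt (sqnorm c t) \<le> sqrt (sqnorm r y * s)"
  proof (cases "sqnorm c t = 0")
    case False
    thus ?thesis using sqnorm_nonneg[of c t] by (intro mult_right_le_imp_le[OF le]) simp
  qed (simp add: s sqnorm_nonneg)
  thus ?thesis unfolding t_def[symmetric] by (simp add: mult.commute)
qed

lemma frob_sq_minus_rank1:
  fixes w :: "nat \<Rightarrow> nat \<Rightarrow> real"
  assumes u: "sqnorm r u = 1" and v: "sqnorm c v = 1"
    and wv: "\<And>a. a < r \<Longrightarrow> (\<Sum>b<c. w a b * v b) = \<sigma> * u a"
  shows "frob_sq r c (\<lambda>a b. w a b - s * u a * v b) = frob_sq r c w - 2 * s * \<sigma> + s^2"
proof -
  have "frob_sq r c (\<lambda>a b. w a b - s * u a * v b) =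
        (\<Sum>a<r. \<Sum>b<c. (w a b)^2 - (2 * s) * (u a * (w a b * v b)) + s^2 * ((u a)^2 * (v b)^2))"
    unfolding frob_sq_def by (intro sum.cong refl) (simp add: power2_diff power_mult_distrib algebra_simps)
  also have "\<dots> = frob_sq r c w - (2 * s) * (\<Sum>a<r. u a * (\<Sum>b<c. w a b * v b))
                  + s^2 * (sqnorm r u * sqnorm c v)"
    unfolding frob_sq_def sqnorm_def
    by (simp add: sum.distrib sum_subtractf sum_distrib_left sum_distrib_right sum.swap[of _ "{..<c}"])
  also have "(\<Sum>a<r. u a * (\<Sum>b<c. w a b * v b)) = \<sigma> * sqnorm r u"
    unfolding sqnorm_def using wv by (simp add: sum_distrib_left power2_eq_square mult_ac)
  finally show ?thesis using u v by simp
qed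

lemma singular_value_sq_le_frob_sq:
  fixes w :: "nat \<Rightarrow> nat \<Rightarrow> real"
  assumes u: "sqnorm r u = 1" and v: "sqnorm c v = 1"
    and wv: "\<And>a. a < r \<Longrightarrow> (\<Sum>b<c. w a b * v b) = \<sigma> * u a"
  shows "\<sigma>^2 \<le> frob_sq r c w"
  using frob_sq_minus_rank1[OF u v wv, of \<sigma>] frob_sq_nonneg[of r c "\<lambda>a b. w a b - \<sigma> * u a * v b"]
  by (simp add: power2_eq_square)

text \<open>Only the top singular direction \<open>u\<close> of \<open>w\<close> can be stretched by \<open>\<sigma>\<close>; the rest of
  \<open>w\<close>, namely \<open>w - \<sigma> u v\<^sup>T\<close>, has squared Frobenius norm \<open>\<parallel>w\<parallel>\<^sub>F\<^sup>2 - \<sigma>\<^sup>2\<close>.\<close>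
lemma sqnorm_tapply_le_split:
  fixes w :: "nat \<Rightarrow> nat \<Rightarrow> real"
  assumes u: "sqnorm r u = 1" and v: "sqnorm c v = 1"
    and wv: "\<And>a. a < r \<Longrightarrow> (\<Sum>b<c. w a b * v b) = \<sigma> * u a"
  shows "sqnorm c (\<lambda>b. \<Sum>a<r. w a b * x a) \<le>
           \<sigma>^2 * (\<Sum>a<r. u a * x a)^2 + (frob_sq r c w - \<sigma>^2) * sqnorm r x"
proof -
  define e where "e a b = w a b - \<sigma> * u a * v b" for a b
  define \<alpha> where "\<alpha> = (\<Sum>a<r. u a * x a)"
  define t where "t b = (\<Sum>a<r. e a b * x a)" for b
  have split: "(\<Sum>a<r. w a b * x a) = \<sigma> * \<alpha> * v b + t b" for b
    unfolding t_def e_def \<alpha>_def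
    by (simp add: algebra_simps sum_subtractf sum_distrib_left sum_distrib_right)
  have orth: "(\<Sum>b<c. v b * t b) = 0"
  proof -
    have "(\<Sum>b<c. v b * t b) = (\<Sum>a<r. x a * (\<Sum>b<c. w a b * v b)) - \<sigma> * \<alpha> * sqnorm c v"
      unfolding t_def e_def \<alpha>_def sqnorm_def
      by (simp add: algebra_simps sum_subtractf sum_distrib_left sum_distrib_right power2_eq_square
          sum.swap[of _ "{..<c}"])
    also have "(\<Sum>a<r. x a * (\<Sum>b<c. w a b * v b)) = \<sigma> * \<alpha>"
      unfolding \<alpha>_def using wv by (simp add: sum_distrib_left algebra_simps)
    finally show ?thesis using v by simp
  qed
  have "sqnorm c (\<lambda>b. \<Sum>a<r. w a b * x a) =
        (\<Sum>b<c. (\<sigma> * \<alpha>)^2 * (v b)^2 + 2 * (\<sigma> * \<alpha>) * (v b * t b) + (t b)^2)"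
    unfolding sqnorm_def split by (intro sum.cong) (auto simp: power2_sum power_mult_distrib algebra_simps)
  also have "\<dots> = (\<sigma> * \<alpha>)^2 * sqnorm c v + 2 * (\<sigma> * \<alpha>) * (\<Sum>b<c. v b * t b) + sqnorm c t"
    unfolding sqnorm_def by (simp add: sum.distrib sum_distrib_left)
  also have "\<dots> = \<sigma>^2 * \<alpha>^2 + sqnorm c t" using orth v by (simp add: power_mult_distrib)
  also have "sqnorm c t \<le> frob_sq r c e * sqnorm r x"
    unfolding t_def by (rule sqnorm_tapply_le_frob_sq)
  also have "frob_sq r c e = frob_sq r c w - \<sigma>^2"
    unfolding e_def using frob_sq_minus_rank1[OF u v wv, of \<sigma>] by (simp add: power2_eq_square)
  finally show ?thesis unfolding \<alpha>_def by simp
qed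

section \<open>Calculus on the half-line\<close>

lemma continuous_on_halfline_if_deriv:
  assumes "\<And>t. t \<ge> 0 \<Longrightarrow> (f has_real_derivative f' t) (at t within {0..})"
  shows "continuous_on {0..} f"
  using DERIV_continuous[OF assms] by (simp add: continuous_on_eq_continuous_within)

lemma mvt_halfline:
  fixes f f' :: "real \<Rightarrow> real"
  assumes der: "\<And>t. t \<ge> 0 \<Longrightarrow> (f has_real_derivative f' t) (at t within {0..})"
    and "0 \<le> a" "a < b"
  obtains z where "a < z" "z < b" "f b - f a = (b - a) * f' z"
proof -
  have "continuous_on {a..b} f"
    using continuous_on_halfline_if_deriv[OF der] by (rule continuous_on_subset) (use assms in auto)
  moreover have deriv_at: "(f has_real_derivative f' x) (at x)" if "0 < x" for x
  proof -
    have "at x within {0..} = at x" using that by (intro at_within_interior) simp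
    thus ?thesis using der[of x] that by simp
  qed
  have "f differentiable (at x)" if "a < x" for x
    unfolding real_differentiable_def using deriv_at[of x] that assms(2) by auto
  ultimately obtain l z where z: "a < z" "z < b" "(f has_real_derivative l) (at z)"
    "f b - f a = (b - a) * l"
    using MVT[OF \<open>a < b\<close>] by blast
  moreover have "l = f' z" using DERIV_unique[OF z(3) deriv_at] z assms by simp
  ultimately show ?thesis using that by blast
qed

lemma antimono_halfline_if_deriv_nonpos:
  fixes f f' :: "real \<Rightarrow> real"
  assumes der: "\<And>t. t \<ge> 0 \<Longrightarrow> (f has_real_derivative f' t) (at t within {0..})"
    and nonpos: "\<And>t. t \<ge> 0 \<Longrightarrow> f' t \<le> 0"
    and "0 \<le> a" "a \<le> b"
  shows "f b \<le> f a"
proof (cases "a = b")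
  case False
  hence "a < b" using assms by simp
  then obtain z where "a < z" "f b - f a = (b - a) * f' z"
    using mvt_halfline[OF der \<open>0 \<le> a\<close>] by blast
  moreover have "f' z \<le> 0" using nonpos[of z] \<open>a < z\<close> assms by simp
  ultimately show ?thesis using assms mult_nonneg_nonpos[of "b - a" "f' z"] by simp
qed simp

lemma const_halfline_if_deriv_zero:
  fixes f :: "real \<Rightarrow> real"
  assumes "\<And>t. t \<ge> 0 \<Longrightarrow> (f has_real_derivative 0) (at t within {0..})" and "t \<ge> 0"
  shows "f t = f 0"
proof -
  have "f t \<le> f 0"
    by (rule antimono_halfline_if_deriv_nonpos[OF assms(1)]) (use assms(2) in auto)
  moreover have "- f t \<le> - f 0"
    by (rule antimono_halfline_if_deriv_nonpos[where f'="\<lambda>_. 0"])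
       (use DERIV_minus[OF assms(1)] assms(2) in auto)
  ultimately show ?thesis by simp
qed

text \<open>While \<open>N\<close> stays below \<open>B + 1\<close> its speed is at most \<open>K\<close>, so starting below \<open>B\<close>
  it needs time at least \<open>1 / K\<close> to get above \<open>B + 1\<close>; the first crossing time is an infimum.\<close>
lemma stays_below_for_a_while:
  fixes N N' :: "real \<Rightarrow> real"
  assumes der: "\<And>t. t \<ge> 0 \<Longrightarrow> (N has_real_derivative N' t) (at t within {0..})"
    and speed: "\<And>t. t \<ge> 0 \<Longrightarrow> N t \<le> B + 1 \<Longrightarrow> \<bar>N' t\<bar> \<le> K" and K: "K > 0"
    and t0: "t0 \<ge> 0" "N t0 \<le> B" and s: "t0 \<le> s" "s \<le> t0 + 1 / (2 * K)"
  shows "N s \<le> B + 1"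
proof (rule ccontr)
  assume "\<not> N s \<le> B + 1"
  define S where "S = {t0..s} \<inter> N -` {B + 1..}"
  have "continuous_on {t0..s} N"
    using continuous_on_halfline_if_deriv[OF der] by (rule continuous_on_subset) (use t0 in auto)
  hence "closed S" unfolding S_def by (intro continuous_closed_preimage) auto
  moreover have "s \<in> S" using \<open>\<not> N s \<le> B + 1\<close> s unfolding S_def by auto
  moreover have "bdd_below S" unfolding S_def by (auto intro: bdd_belowI[of _ t0])
  ultimately have "Inf S \<in> S" by (intro closed_contains_Inf) auto
  define s' where "s' = Inf S"
  have s': "t0 \<le> s'" "s' \<le> s" "N s' \<ge> B + 1"
    using \<open>Inf S \<in> S\<close> unfolding s'_def S_def by auto
  hence "t0 < s'" using t0 by (cases "t0 = s'") auto
  have below: "N x < B + 1" if "t0 \<le> x" "x < s'" for x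
  proof (rule ccontr)
    assume "\<not> N x < B + 1"
    hence "x \<in> S" unfolding S_def using that s' by auto
    hence "s' \<le> x" unfolding s'_def using \<open>bdd_below S\<close> by (rule cInf_lower)
    thus False using that by simp
  qed
  obtain z where z: "t0 < z" "z < s'" "N s' - N t0 = (s' - t0) * N' z"
    using mvt_halfline[OF der t0(1) \<open>t0 < s'\<close>] by blast
  have "N' z \<le> K" using speed[of z] below[of z] z t0 by auto
  hence "N s' - N t0 \<le> (s' - t0) * K" using z \<open>t0 < s'\<close> by (simp add: mult_left_mono)
  also have "\<dots> \<le> 1 / (2 * K) * K" using s' s K by (intro mult_right_mono) auto
  finally show False using s' t0 K by simp
qed

lemma descent_after_low_visit:
  fixes N N' R R' :: "real \<Rightarrow> real"
  assumes dN: "\<And>t. t \<ge> 0 \<Longrightarrow> (N has_real_derivative N' t) (at t within {0..})"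
    and dR: "\<And>t. t \<ge> 0 \<Longrightarrow> (R has_real_derivative R' t) (at t within {0..})"
    and low: "\<And>t. t \<ge> 0 \<Longrightarrow> N t \<le> B + 1 \<Longrightarrow> R' t \<le> - c \<and> \<bar>N' t\<bar> \<le> K" and K: "K > 0"
    and t0: "t0 \<ge> 0" "N t0 \<le> B"
  shows "R (t0 + 1 / (2 * K)) \<le> R t0 - c * (1 / (2 * K))"
proof -
  define h where "h = 1 / (2 * K)"
  obtain z where z: "t0 < z" "z < t0 + h" "R (t0 + h) - R t0 = h * R' z"
    using mvt_halfline[OF dR t0(1), of "t0 + h"] K unfolding h_def by auto
  have "N z \<le> B + 1"
    using stays_below_for_a_while[OF dN _ K t0, of z] low z unfolding h_def by auto
  hence "h * R' z \<le> h * (- c)" using low[of z] z t0 K unfolding h_def by (intro mult_left_mono) auto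
  thus ?thesis using z unfolding h_def[symmetric] by (simp add: algebra_simps)
qed

text \<open>A nonnegative quantity \<open>R\<close> that decreases at a definite rate whenever \<open>N \<le> B\<close>, while
  \<open>N\<close> moves at bounded speed there, forces \<open>N \<rightarrow> \<infinity>\<close>: otherwise \<open>N\<close> returns below some \<open>B\<close>
  infinitely often, each visit costing \<open>R\<close> a fixed amount.\<close>
lemma filterlim_at_top_if_descent:
  fixes N N' R R' :: "real \<Rightarrow> real"
  assumes dN: "\<And>t. t \<ge> 0 \<Longrightarrow> (N has_real_derivative N' t) (at t within {0..})"
    and dR: "\<And>t. t \<ge> 0 \<Longrightarrow> (R has_real_derivative R' t) (at t within {0..})"
    and R_nonneg: "\<And>t. t \<ge> 0 \<Longrightarrow> R t \<ge> 0"
    and R'_nonpos: "\<And>t. t \<ge> 0 \<Longrightarrow> R' t \<le> 0"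
    and descent: "\<And>B. \<exists>c>0. \<exists>K>0. \<forall>t\<ge>0. N t \<le> B \<longrightarrow> R' t \<le> - c \<and> \<bar>N' t\<bar> \<le> K"
  shows "filterlim N at_top at_top"
proof (rule ccontr)
  assume "\<not> filterlim N at_top at_top"
  then obtain B where not_ev: "\<not> eventually (\<lambda>t. B \<le> N t) at_top"
    unfolding filterlim_at_top by blast
  have often: "\<exists>t\<ge>T. N t \<le> B" for T
  proof (rule ccontr)
    assume "\<not> (\<exists>t\<ge>T. N t \<le> B)"
    hence "eventually (\<lambda>t. B \<le> N t) at_top"
      unfolding eventually_at_top_linorder by (auto intro!: exI[of _ T])
    thus False using not_ev by simp
  qed
  obtain c K where c: "c > 0" and K: "K > 0"
    and cK: "\<And>t. t \<ge> 0 \<Longrightarrow> N t \<le> B + 1 \<Longrightarrow> R' t \<le> - c \<and> \<bar>N' t\<bar> \<le> K"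
    using descent[of "B + 1"] by blast
  define h where "h = 1 / (2 * K)"
  have h: "h > 0" unfolding h_def using K by simp
  have drop: "R (t0 + h) \<le> R t0 - c * h" if "t0 \<ge> 0" "N t0 \<le> B" for t0
    unfolding h_def by (rule descent_after_low_visit[OF dN dR cK K that]) auto
  have "\<exists>t\<ge>0. R t \<le> R 0 - real m * (c * h)" for m
  proof (induction m)
    case (Suc m)
    then obtain t where t: "t \<ge> 0" "R t \<le> R 0 - real m * (c * h)" by blast
    obtain t' where t': "t' \<ge> t" "N t' \<le> B" using often by blast
    have "R (t' + h) \<le> R t' - c * h" using drop t' t by auto
    also have "R t' \<le> R t"
      using antimono_halfline_if_deriv_nonpos[OF dR R'_nonpos] t t' by blast
    finally show ?case using t t' h by (intro exI[of _ "t' + h"]) (auto simp: algebra_simps)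
  qed (auto intro: exI[of _ 0])
  moreover obtain m :: nat where "real m > R 0 / (c * h)" using reals_Archimedean2 by blast
  hence "real m * (c * h) > R 0" using c h by (simp add: field_simps)
  ultimately show False using R_nonneg by (smt (verit))
qed

lemma continuous_neg_bounded_on_interval:
  fixes f :: "real \<Rightarrow> real"
  assumes "continuous_on UNIV f" and "\<And>x. f x < 0"
  obtains lam Lam where "lam > 0" "\<And>x. \<bar>x\<bar> \<le> M \<Longrightarrow> - Lam \<le> f x \<and> f x \<le> - lam"
proof (cases "M \<ge> 0")
  case True
  have cont: "continuous_on {-M..M} f" using assms(1) continuous_on_subset by blast
  obtain x0 where "x0 \<in> {-M..M}" "\<And>x. x \<in> {-M..M} \<Longrightarrow> f x \<le> f x0"
    using continuous_attains_sup[OF compact_Icc _ cont] True by auto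
  moreover obtain x1 where "x1 \<in> {-M..M}" "\<And>x. x \<in> {-M..M} \<Longrightarrow> f x1 \<le> f x"
    using continuous_attains_inf[OF compact_Icc _ cont] True by auto
  ultimately show ?thesis
    using that[of "- f x0" "- f x1"] assms(2)[of x0] by (force simp: abs_le_iff)
qed (use that[of 1 0] in auto)

lemma ratio_tendsto_1:
  fixes N :: "real \<Rightarrow> real"
  assumes "filterlim N at_top at_top"
  shows "((\<lambda>t. (N t + a) / (N t + b)) \<longlongrightarrow> 1) at_top"
proof -
  have inf: "filterlim (\<lambda>t. N t + b) at_top at_top"
    using filterlim_tendsto_add_at_top[OF tendsto_const assms] by (simp add: add.commute)
  have "((\<lambda>t. 1 + (a - b) / (N t + b)) \<longlongrightarrow> 1 + 0) at_top"
    by (intro tendsto_add tendsto_const tendsto_divide_0[OF tendsto_const]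
        filterlim_at_top_imp_at_infinity[OF inf])
  moreover have "eventually (\<lambda>t. 1 + (a - b) / (N t + b) = (N t + a) / (N t + b)) at_top"
    using inf[unfolded filterlim_at_top, rule_format, of 1]
    by eventually_elim (simp add: field_simps)
  ultimately show ?thesis by (simp add: tendsto_cong)
qed

lemma tendsto_1_squeeze:
  fixes N f :: "real \<Rightarrow> real"
  assumes "filterlim N at_top at_top"
    and "eventually (\<lambda>t. (N t + a) / (N t + b) \<le> f t) at_top"
    and "eventually (\<lambda>t. f t \<le> 1) at_top"
  shows "(f \<longlongrightarrow> 1) at_top"
  by (rule tendsto_sandwich[OF assms(2,3) ratio_tendsto_1[OF assms(1)] tendsto_const])

section \<open>Deep linear networks\<close>

text \<open>Writing \<open>W(j)\<close> for \<open>Ws j\<close>, \<open>forward d Ws x j\<close> is \<open>W(j) \<cdots> W(1) x\<close> and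
  \<open>backward L d Ws j\<close> is \<open>(W(L) \<cdots> W(j+1))\<^sup>T 1\<close>, both as coordinate functions; for
  \<open>d L = 1\<close> the network output is \<open>forward d Ws x L 0\<close>.\<close>
fun forward :: "(nat \<Rightarrow> nat) \<Rightarrow> (nat \<Rightarrow> real mat) \<Rightarrow> (nat \<Rightarrow> real) \<Rightarrow> nat \<Rightarrow> nat \<Rightarrow> real" where
  "forward d Ws x 0 = x"
| "forward d Ws x (Suc j) = (\<lambda>a. \<Sum>c<d j. Ws (Suc j) $$ (a,c) * forward d Ws x j c)"

function backward :: "nat \<Rightarrow> (nat \<Rightarrow> nat) \<Rightarrow> (nat \<Rightarrow> real mat) \<Rightarrow> nat \<Rightarrow> nat \<Rightarrow> real" where
  "backward L d Ws j =
     (if L \<le> j then (\<lambda>_. 1)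
      else (\<lambda>b. \<Sum>a<d (Suc j). Ws (Suc j) $$ (a,b) * backward L d Ws (Suc j) a))"
  by auto
termination by (relation "Wellfounded.measure (\<lambda>(L, d, Ws, j). L - j)") auto

declare backward.simps [simp del]

lemma backward_last [simp]: "backward L d Ws L = (\<lambda>_. 1)"
  by (simp add: backward.simps)

lemma backward_step:
  "j < L \<Longrightarrow> backward L d Ws j = (\<lambda>b. \<Sum>a<d (Suc j). Ws (Suc j) $$ (a,b) * backward L d Ws (Suc j) a)"
  by (subst backward.simps) simp

lemma output_eq_backward_forward:
  assumes "d L = 1" and "j \<le> L"
  shows "forward d Ws x L 0 = (\<Sum>a<d j. backward L d Ws j a * forward d Ws x j a)"
  using assms(2)
proof (induction j rule: inc_induct)
  case base
  show ?case using assms(1) by simp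
next
  case (step j)
  have "(\<Sum>a<d (Suc j). backward L d Ws (Suc j) a * forward d Ws x (Suc j) a)
      = (\<Sum>c<d j. \<Sum>a<d (Suc j). backward L d Ws (Suc j) a * Ws (Suc j) $$ (a,c) * forward d Ws x j c)"
    by (simp add: sum_distrib_left mult.assoc sum.swap[of _ "{..<d (Suc j)}"])
  also have "\<dots> = (\<Sum>c<d j. backward L d Ws j c * forward d Ws x j c)"
    using backward_step[OF step.hyps(2)] by (simp add: sum_distrib_left sum_distrib_right mult_ac)
  finally show ?case using step.IH by simp
qed

lemma forward_cong:
  "(\<And>i. 1 \<le> i \<Longrightarrow> i \<le> j \<Longrightarrow> Ws i = Ws' i) \<Longrightarrow> forward d Ws x j = forward d Ws' x j"
  by (induction j) auto

lemma backward_cong: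
  assumes "j \<le> L" and "\<And>i. j < i \<Longrightarrow> i \<le> L \<Longrightarrow> Ws i = Ws' i"
  shows "backward L d Ws j = backward L d Ws' j"
  using assms by (induction j rule: inc_induct) (auto simp: backward_step)

lemma weights_dims_layer:
  "weights_dims L d Ws \<Longrightarrow> Suc j \<le> L \<Longrightarrow> Ws (Suc j) \<in> carrier_mat (d (Suc j)) (d j)"
  unfolding weights_dims_def by (drule bspec[of _ _ "Suc j"]) auto

lemma prod_layers_carrier:
  "weights_dims L d Ws \<Longrightarrow> j \<le> L \<Longrightarrow> prod_layers d Ws j \<in> carrier_mat (d j) (d 0)"
  by (induction j) (auto dest: weights_dims_layer)

lemma prod_layers_mult_vec:
  assumes wd: "weights_dims L d Ws" and z: "z \<in> carrier_vec (d 0)" and "j \<le> L"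
  shows "prod_layers d Ws j *\<^sub>v z = vec (d j) (forward d Ws (\<lambda>i. z $ i) j)"
  using \<open>j \<le> L\<close>
proof (induction j)
  case 0
  thus ?case using z by (auto intro!: eq_vecI)
next
  case (Suc j)
  have W: "Ws (Suc j) \<in> carrier_mat (d (Suc j)) (d j)" using Suc.prems wd weights_dims_layer by auto
  have "prod_layers d Ws (Suc j) *\<^sub>v z = Ws (Suc j) *\<^sub>v (prod_layers d Ws j *\<^sub>v z)"
    using W prod_layers_carrier[OF wd, of j] Suc.prems z by simp
  also have "\<dots> = vec (d (Suc j)) (forward d Ws (\<lambda>i. z $ i) (Suc j))"
    using W Suc by (auto intro!: eq_vecI simp: scalar_prod_def atLeast0LessThan intro: sum.cong)
  finally show ?case .
qed

lemma sum_bilinear_update_entry: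
  fixes q p :: "nat \<Rightarrow> real"
  assumes "a < r" "b < s"
  shows "(\<Sum>c<r. q c * (\<Sum>e<s. (if (c,e) = (a,b) then x else w c e) * p e)) =
         (\<Sum>c<r. q c * (\<Sum>e<s. w c e * p e)) + q a * p b * (x - w a b)"
proof -
  define \<delta> where "\<delta> = x - w a b"
  have inner: "(\<Sum>e<s. (if (c,e) = (a,b) then x else w c e) * p e) =
               (\<Sum>e<s. w c e * p e) + (if c = a then \<delta> * p b else 0)" for c
  proof -
    have "(\<Sum>e<s. (if (c,e) = (a,b) then x else w c e) * p e) =
          (\<Sum>e<s. w c e * p e + (if e = b then if c = a then \<delta> * p b else 0 else 0))"
      unfolding \<delta>_def by (rule sum.cong) (auto simp: algebra_simps)
    thus ?thesis using assms(2) by (simp add: sum.distrib)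
  qed
  have "(\<Sum>c<r. q c * (if c = a then \<delta> * p b else 0)) = (\<Sum>c<r. if c = a then q a * \<delta> * p b else 0)"
    by (rule sum.cong) auto
  thus ?thesis using assms(1) unfolding inner \<delta>_def by (simp add: distrib_left sum.distrib)
qed

lemma forward_upd_entry:
  assumes wd: "weights_dims L d Ws" and d_L: "d L = 1"
    and j: "Suc j \<le> L" and a: "a < d (Suc j)" and b: "b < d j"
  shows "forward d (upd_entry Ws (Suc j) a b x) z L 0 =
         forward d Ws z L 0 + backward L d Ws (Suc j) a * forward d Ws z j b * (x - Ws (Suc j) $$ (a,b))"
proof -
  define Ws' where "Ws' = upd_entry Ws (Suc j) a b x"
  have W: "Ws (Suc j) \<in> carrier_mat (d (Suc j)) (d j)" by (rule weights_dims_layer[OF wd j])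
  have other: "Ws' i = Ws i" if "i \<noteq> Suc j" for i
    using that unfolding Ws'_def upd_entry_def by simp
  have entry: "Ws' (Suc j) $$ (c,e) = (if (c,e) = (a,b) then x else Ws (Suc j) $$ (c,e))"
    if "c < d (Suc j)" "e < d j" for c e
    using W that unfolding Ws'_def upd_entry_def by auto
  have "forward d Ws' z L 0 =
        (\<Sum>c<d (Suc j). backward L d Ws' (Suc j) c * (\<Sum>e<d j. Ws' (Suc j) $$ (c,e) * forward d Ws' z j e))"
    using output_eq_backward_forward[where d=d and L=L, OF d_L j] by simp
  also have "\<dots> = (\<Sum>c<d (Suc j). backward L d Ws (Suc j) c *
                   (\<Sum>e<d j. (if (c,e) = (a,b) then x else Ws (Suc j) $$ (c,e)) * forward d Ws z j e))"
    using j entry backward_cong[OF j, of Ws' Ws] forward_cong[of j Ws' Ws] other by simp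
  also have "\<dots> = forward d Ws z L 0 + backward L d Ws (Suc j) a * forward d Ws z j b * (x - Ws (Suc j) $$ (a,b))"
    using output_eq_backward_forward[where d=d and L=L and Ws=Ws and x=z, OF d_L j] sum_bilinear_update_entry[OF a b] by simp
  finally show ?thesis unfolding Ws'_def .
qed

lemma grad_entry_loss_of_output:
  assumes R: "\<And>Ws. weights_dims L d Ws \<Longrightarrow> R Ws = (1 / real k) * (\<Sum>i<k. loss (forward d Ws (z i) L 0))"
    and loss_deriv: "\<And>x. (loss has_real_derivative loss' x) (at x)"
    and wd: "weights_dims L d Ws" and d_L: "d L = 1"
    and j: "Suc j \<le> L" and a: "a < d (Suc j)" and b: "b < d j"
  shows "grad_entry R Ws (Suc j) a b =
         (1 / real k) * (\<Sum>i<k. loss' (forward d Ws (z i) L 0) * (backward L d Ws (Suc j) a * forward d Ws (z i) j b))"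
proof -
  define x0 where "x0 = Ws (Suc j) $$ (a,b)"
  define m where "m i = forward d Ws (z i) L 0" for i
  define B where "B i = backward L d Ws (Suc j) a * forward d Ws (z i) j b" for i
  have "weights_dims L d (upd_entry Ws (Suc j) a b x)" for x
    using wd weights_dims_layer[OF wd j]
    unfolding weights_dims_def upd_entry_def by (auto simp del: One_nat_def)
  hence eq: "R (upd_entry Ws (Suc j) a b x) = (1 / real k) * (\<Sum>i<k. loss (m i + B i * (x - x0)))" for x
    using R forward_upd_entry[OF wd d_L j a b] unfolding m_def B_def x0_def by (simp add: mult.assoc)
  have "((\<lambda>x. loss (m i + B i * (x - x0))) has_real_derivative loss' (m i) * B i) (at x0)" for i
  proof -
    have "((\<lambda>x. m i + B i * (x - x0)) has_real_derivative B i) (at x0)"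
      by (auto intro!: derivative_eq_intros)
    from DERIV_chain2[OF loss_deriv this] show ?thesis by simp
  qed
  hence "((\<lambda>x. (1 / real k) * (\<Sum>i<k. loss (m i + B i * (x - x0)))) has_real_derivative
         (1 / real k) * (\<Sum>i<k. loss' (m i) * B i)) (at x0)"
    by (intro DERIV_cmult DERIV_sum)
  thus ?thesis
    unfolding grad_entry_def eq x0_def[symmetric] m_def B_def by (rule DERIV_imp_deriv)
qed

lemma sqnorm_backward_le:
  assumes d_L: "d L = 1" and "j \<le> L"
  shows "sqnorm (d j) (backward L d Ws j) \<le> (\<Prod>i\<in>{Suc j..L}. frob_sq (d i) (d (i - 1)) (\<lambda>a b. Ws i $$ (a,b)))"
  using assms(2)
proof (induction j rule: inc_induct)
  case base
  show ?case using d_L by (simp add: sqnorm_def)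
next
  case (step j)
  have "sqnorm (d j) (backward L d Ws j) \<le>
        frob_sq (d (Suc j)) (d j) (\<lambda>a b. Ws (Suc j) $$ (a,b)) * sqnorm (d (Suc j)) (backward L d Ws (Suc j))"
    unfolding backward_step[OF step.hyps(2)] by (rule sqnorm_tapply_le_frob_sq)
  also have "\<dots> \<le> frob_sq (d (Suc j)) (d j) (\<lambda>a b. Ws (Suc j) $$ (a,b)) *
                 (\<Prod>i\<in>{Suc (Suc j)..L}. frob_sq (d i) (d (i - 1)) (\<lambda>a b. Ws i $$ (a,b)))"
    using step.IH frob_sq_nonneg by (intro mult_left_mono) auto
  finally show ?case using step.hyps(2) by (simp add: prod.atLeast_Suc_atMost)
qed

lemma output_sq_le_input:
  assumes "d L = 1"
  shows "(forward d Ws x L 0)^2 \<le> sqnorm (d 0) (backward L d Ws 0) * sqnorm (d 0) x"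
  using output_eq_backward_forward[where d=d and L=L, OF assms, of 0] cauchy_schwarz_sqnorm by simp

lemma output_sq_le_first_layer:
  assumes "d L = 1" and "L \<ge> 1"
  shows "(forward d Ws x L 0)^2 \<le>
           sqnorm (d 1) (backward L d Ws 1) * (frob_sq (d 1) (d 0) (\<lambda>a b. Ws 1 $$ (a,b)) * sqnorm (d 0) x)"
proof -
  have "(forward d Ws x L 0)^2 \<le> sqnorm (d 1) (backward L d Ws 1) * sqnorm (d 1) (forward d Ws x 1)"
    using output_eq_backward_forward[where d=d and L=L, OF assms(1), of 1] assms(2) cauchy_schwarz_sqnorm
    by simp
  also have "sqnorm (d 1) (forward d Ws x 1) \<le> frob_sq (d 1) (d 0) (\<lambda>a b. Ws 1 $$ (a,b)) * sqnorm (d 0) x"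
    using sqnorm_apply_le_frob_sq[where r="d 1" and c="d 0" and w="\<lambda>a b. Ws 1 $$ (a,b)"] by simp
  finally show ?thesis using sqnorm_nonneg by (simp add: mult_left_mono)
qed

section \<open>Gradient flow: balancedness and divergence of the norms\<close>

text \<open>\<open>R\<close> need only agree with the empirical risk on weights of the right shape: the
  gradient flow never evaluates it elsewhere.\<close>
locale linear_net_flow =
  fixes L k :: nat
    and d :: "nat \<Rightarrow> nat"
    and z :: "nat \<Rightarrow> nat \<Rightarrow> real"
    and loss loss' :: "real \<Rightarrow> real"
    and R :: "(nat \<Rightarrow> real mat) \<Rightarrow> real"
    and W :: "real \<Rightarrow> nat \<Rightarrow> real mat"
  assumes L_pos: "L \<ge> 1"
    and d_L: "d L = 1"
    and k_pos: "k > 0"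
    and separable: "\<exists>ub. \<forall>i<k. (\<Sum>b<d 0. z i b * ub b) > 0"
    and loss_pos: "\<And>x. loss x > 0"
    and loss_deriv: "\<And>x. (loss has_real_derivative loss' x) (at x)"
    and loss'_cont: "continuous_on UNIV loss'"
    and loss'_neg: "\<And>x. loss' x < 0"
    and risk: "\<And>Ws. weights_dims L d Ws \<Longrightarrow> R Ws = (1 / real k) * (\<Sum>i<k. loss (forward d Ws (z i) L 0))"
    and flow: "gradient_flow L d R W"
    and init: "R (W 0) < loss 0"
begin

definition margin :: "real \<Rightarrow> nat \<Rightarrow> real" where
  "margin t i = forward d (W t) (z i) L 0"

definition grad :: "real \<Rightarrow> nat \<Rightarrow> nat \<Rightarrow> nat \<Rightarrow> real" where
  "grad t j a b = grad_entry R (W t) j a b"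

lemma weights_dims_W: "t \<ge> 0 \<Longrightarrow> weights_dims L d (W t)"
  using flow unfolding gradient_flow_def by auto

lemma layer_carrier: "t \<ge> 0 \<Longrightarrow> j \<in> {1..L} \<Longrightarrow> W t j \<in> carrier_mat (d j) (d (j - 1))"
  using weights_dims_W unfolding weights_dims_def by blast

lemma has_deriv_W:
  "t \<ge> 0 \<Longrightarrow> Suc j \<le> L \<Longrightarrow> a < d (Suc j) \<Longrightarrow> b < d j \<Longrightarrow>
   ((\<lambda>s. W s (Suc j) $$ (a,b)) has_real_derivative - grad t (Suc j) a b) (at t within {0..})"
  using flow unfolding gradient_flow_def grad_def by auto

lemma grad_eq:
  "t \<ge> 0 \<Longrightarrow> Suc j \<le> L \<Longrightarrow> a < d (Suc j) \<Longrightarrow> b < d j \<Longrightarrow>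
   grad t (Suc j) a b =
     (1 / real k) * (\<Sum>i<k. loss' (margin t i) * (backward L d (W t) (Suc j) a * forward d (W t) (z i) j b))"
  unfolding grad_def margin_def
  by (rule grad_entry_loss_of_output[OF risk loss_deriv weights_dims_W d_L])

lemma risk_W: "t \<ge> 0 \<Longrightarrow> R (W t) = (1 / real k) * (\<Sum>i<k. loss (margin t i))"
  unfolding margin_def by (rule risk[OF weights_dims_W])

fun forward_deriv :: "real \<Rightarrow> (nat \<Rightarrow> real) \<Rightarrow> nat \<Rightarrow> nat \<Rightarrow> real" where
  "forward_deriv t x 0 = (\<lambda>c. 0)"
| "forward_deriv t x (Suc j) =
     (\<lambda>c. \<Sum>e<d j. - grad t (Suc j) c e * forward d (W t) x j e + W t (Suc j) $$ (c,e) * forward_deriv t x j e)"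

lemma has_deriv_forward:
  "t \<ge> 0 \<Longrightarrow> j \<le> L \<Longrightarrow> c < d j \<Longrightarrow>
   ((\<lambda>s. forward d (W s) x j c) has_real_derivative forward_deriv t x j c) (at t within {0..})"
proof (induction j arbitrary: c)
  case (Suc j)
  have "((\<lambda>s. W s (Suc j) $$ (c,e) * forward d (W s) x j e) has_real_derivative
         - grad t (Suc j) c e * forward d (W t) x j e + W t (Suc j) $$ (c,e) * forward_deriv t x j e)
        (at t within {0..})" if "e < d j" for e
    using DERIV_mult[OF has_deriv_W Suc.IH] Suc.prems that by (simp add: mult.commute)
  thus ?case by (auto intro: DERIV_sum)
qed simp

lemma backward_forward_deriv:
  "j \<le> L \<Longrightarrow> (\<Sum>c<d j. backward L d (W t) j c * forward_deriv t x j c) =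
     (\<Sum>jj<j. \<Sum>a<d (Suc jj). \<Sum>b<d jj.
        backward L d (W t) (Suc jj) a * - grad t (Suc jj) a b * forward d (W t) x jj b)"
proof (induction j)
  case (Suc j)
  have split: "(\<Sum>c<d (Suc j). backward L d (W t) (Suc j) c * forward_deriv t x (Suc j) c) =
        (\<Sum>c<d (Suc j). \<Sum>e<d j. backward L d (W t) (Suc j) c * - grad t (Suc j) c e * forward d (W t) x j e)
      + (\<Sum>c<d (Suc j). \<Sum>e<d j. backward L d (W t) (Suc j) c * W t (Suc j) $$ (c,e) * forward_deriv t x j e)"
    by (simp add: sum_distrib_left algebra_simps sum.distrib sum_subtractf sum_negf)
  have "(\<Sum>c<d (Suc j). \<Sum>e<d j. backward L d (W t) (Suc j) c * W t (Suc j) $$ (c,e) * forward_deriv t x j e)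
      = (\<Sum>e<d j. \<Sum>c<d (Suc j). backward L d (W t) (Suc j) c * W t (Suc j) $$ (c,e) * forward_deriv t x j e)"
    by (rule sum.swap)
  also have "\<dots> = (\<Sum>e<d j. backward L d (W t) j e * forward_deriv t x j e)"
    using backward_step[of j L d "W t"] Suc.prems by (simp add: sum_distrib_left mult_ac)
  finally have "(\<Sum>c<d (Suc j). \<Sum>e<d j. backward L d (W t) (Suc j) c * W t (Suc j) $$ (c,e) * forward_deriv t x j e)
      = (\<Sum>e<d j. backward L d (W t) j e * forward_deriv t x j e)" .
  thus ?case using Suc split by simp
qed simp

lemma has_deriv_margin:
  "t \<ge> 0 \<Longrightarrow> ((\<lambda>s. margin s i) has_real_derivative
     (\<Sum>jj<L. \<Sum>a<d (Suc jj). \<Sum>b<d jj.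
        backward L d (W t) (Suc jj) a * - grad t (Suc jj) a b * forward d (W t) (z i) jj b))
   (at t within {0..})"
  using has_deriv_forward[of t L 0 "z i"] backward_forward_deriv[of L t "z i"] d_L
  unfolding margin_def by simp

definition grad_sq :: "real \<Rightarrow> real" where
  "grad_sq t = (\<Sum>jj<L. \<Sum>a<d (Suc jj). \<Sum>b<d jj. (grad t (Suc jj) a b)^2)"

lemma grad_sq_nonneg: "grad_sq t \<ge> 0"
  unfolding grad_sq_def by (simp add: sum_nonneg)

lemma has_deriv_risk:
  assumes t: "t \<ge> 0"
  shows "((\<lambda>s. R (W s)) has_real_derivative - grad_sq t) (at t within {0..})"
proof -
  define D where "D i = (\<Sum>jj<L. \<Sum>a<d (Suc jj). \<Sum>b<d jj.
     backward L d (W t) (Suc jj) a * - grad t (Suc jj) a b * forward d (W t) (z i) jj b)" for i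
  have "((\<lambda>s. loss (margin s i)) has_real_derivative loss' (margin t i) * D i) (at t within {0..})" for i
    unfolding D_def by (rule DERIV_chain2[OF loss_deriv has_deriv_margin[OF t]])
  hence "((\<lambda>s. (1 / real k) * (\<Sum>i<k. loss (margin s i))) has_real_derivative
          (1 / real k) * (\<Sum>i<k. loss' (margin t i) * D i)) (at t within {0..})"
    by (intro DERIV_cmult DERIV_sum)
  moreover have "(1 / real k) * (\<Sum>i<k. loss' (margin t i) * D i) = - grad_sq t"
  proof -
    have "(1 / real k) * (\<Sum>i<k. loss' (margin t i) * D i) =
          (1 / real k) * (\<Sum>jj<L. \<Sum>a<d (Suc jj). \<Sum>b<d jj. \<Sum>i<k. loss' (margin t i) *
             (backward L d (W t) (Suc jj) a * - grad t (Suc jj) a b * forward d (W t) (z i) jj b))"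
      unfolding D_def by (subst sum_mult_sum3_swap) (rule refl)
    also have "\<dots> = (\<Sum>jj<L. \<Sum>a<d (Suc jj). \<Sum>b<d jj. - grad t (Suc jj) a b *
            ((1 / real k) * (\<Sum>i<k. loss' (margin t i) *
               (backward L d (W t) (Suc jj) a * forward d (W t) (z i) jj b))))"
      by (simp add: sum_distrib_left algebra_simps)
    also have "\<dots> = (\<Sum>jj<L. \<Sum>a<d (Suc jj). \<Sum>b<d jj. - grad t (Suc jj) a b * grad t (Suc jj) a b)"
      using grad_eq[OF t] by (intro sum.cong refl) simp
    finally show ?thesis unfolding grad_sq_def by (simp add: power2_eq_square sum_negf)
  qed
  ultimately have "((\<lambda>s. (1 / real k) * (\<Sum>i<k. loss (margin s i))) has_real_derivative - grad_sq t)
                     (at t within {0..})"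
    by simp
  thus ?thesis
    by (rule has_field_derivative_transform_within[where d=1]) (use t risk_W in auto)
qed

lemma risk_antimono: "0 \<le> s \<Longrightarrow> s \<le> t \<Longrightarrow> R (W t) \<le> R (W s)"
  using antimono_halfline_if_deriv_nonpos[OF has_deriv_risk] grad_sq_nonneg by auto

text \<open>\<open>gram_gap t j\<close> is \<open>W(j+2)\<^sup>T W(j+2) - W(j+1) W(j+1)\<^sup>T\<close> at time \<open>t\<close>. Both terms
  have derivative \<open>-(H + H\<^sup>T)\<close> with \<open>H = grad_outer t j\<close>, so it is conserved (balancedness).\<close>
definition gram_gap :: "real \<Rightarrow> nat \<Rightarrow> nat \<Rightarrow> nat \<Rightarrow> real" where
  "gram_gap t j a b =
     (\<Sum>c<d (Suc (Suc j)). W t (Suc (Suc j)) $$ (c,a) * W t (Suc (Suc j)) $$ (c,b))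
   - (\<Sum>c<d j. W t (Suc j) $$ (a,c) * W t (Suc j) $$ (b,c))"

definition grad_outer :: "real \<Rightarrow> nat \<Rightarrow> nat \<Rightarrow> nat \<Rightarrow> real" where
  "grad_outer t j a b = (1 / real k) *
     (\<Sum>i<k. loss' (margin t i) * forward d (W t) (z i) (Suc j) a * backward L d (W t) (Suc j) b)"

lemma grad_tmult_next_layer:
  assumes t: "t \<ge> 0" and j: "Suc (Suc j) \<le> L" and a: "a < d (Suc j)"
  shows "(\<Sum>c<d (Suc (Suc j)). grad t (Suc (Suc j)) c a * W t (Suc (Suc j)) $$ (c,b)) = grad_outer t j a b"
proof -
  have "(\<Sum>c<d (Suc (Suc j)). grad t (Suc (Suc j)) c a * W t (Suc (Suc j)) $$ (c,b)) =
        (\<Sum>c<d (Suc (Suc j)). \<Sum>i<k. (1 / real k) * (loss' (margin t i) * forward d (W t) (z i) (Suc j) a *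
           (W t (Suc (Suc j)) $$ (c,b) * backward L d (W t) (Suc (Suc j)) c)))"
    using grad_eq[OF t j _ a] by (intro sum.cong refl) (simp add: sum_distrib_left sum_distrib_right mult_ac)
  also have "\<dots> = (1 / real k) * (\<Sum>i<k. loss' (margin t i) * forward d (W t) (z i) (Suc j) a *
           (\<Sum>c<d (Suc (Suc j)). W t (Suc (Suc j)) $$ (c,b) * backward L d (W t) (Suc (Suc j)) c))"
    by (subst sum.swap) (simp add: sum_distrib_left)
  finally show ?thesis
    unfolding grad_outer_def using backward_step[of "Suc j" L d "W t"] j by simp
qed

lemma grad_mult_prev_layer:
  assumes t: "t \<ge> 0" and j: "Suc (Suc j) \<le> L" and a: "a < d (Suc j)"
  shows "(\<Sum>c<d j. grad t (Suc j) a c * W t (Suc j) $$ (b,c)) = grad_outer t j b a"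
proof -
  have "(\<Sum>c<d j. grad t (Suc j) a c * W t (Suc j) $$ (b,c)) =
        (\<Sum>c<d j. \<Sum>i<k. (1 / real k) * (loss' (margin t i) * backward L d (W t) (Suc j) a *
           (W t (Suc j) $$ (b,c) * forward d (W t) (z i) j c)))"
    using grad_eq[OF t _ a] j by (intro sum.cong refl) (simp add: sum_distrib_left sum_distrib_right mult_ac)
  also have "\<dots> = (1 / real k) * (\<Sum>i<k. loss' (margin t i) * backward L d (W t) (Suc j) a *
           (\<Sum>c<d j. W t (Suc j) $$ (b,c) * forward d (W t) (z i) j c))"
    by (subst sum.swap) (simp add: sum_distrib_left)
  finally show ?thesis unfolding grad_outer_def by (simp add: mult_ac)
qed

lemma has_deriv_gram_gap:
  assumes t: "t \<ge> 0" and j: "Suc (Suc j) \<le> L" and a: "a < d (Suc j)" and b: "b < d (Suc j)"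
  shows "((\<lambda>s. gram_gap s j a b) has_real_derivative 0) (at t within {0..})"
proof -
  let ?V = "W t (Suc (Suc j))" and ?U = "W t (Suc j)"
  have "((\<lambda>s. \<Sum>c<d (Suc (Suc j)). W s (Suc (Suc j)) $$ (c,a) * W s (Suc (Suc j)) $$ (c,b))
         has_real_derivative
         (\<Sum>c<d (Suc (Suc j)). - grad t (Suc (Suc j)) c a * ?V $$ (c,b) + - grad t (Suc (Suc j)) c b * ?V $$ (c,a)))
        (at t within {0..})"
    using has_deriv_W[OF t j] a b by (intro DERIV_sum) (auto intro!: derivative_eq_intros)
  moreover have "((\<lambda>s. W s (Suc j) $$ (a,c) * W s (Suc j) $$ (b,c)) has_real_derivative
         - grad t (Suc j) a c * ?U $$ (b,c) + - grad t (Suc j) b c * ?U $$ (a,c)) (at t within {0..})"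
    if "c < d j" for c
    using DERIV_mult[OF has_deriv_W[OF t _ a that] has_deriv_W[OF t _ b that]] j by simp
  hence "((\<lambda>s. \<Sum>c<d j. W s (Suc j) $$ (a,c) * W s (Suc j) $$ (b,c)) has_real_derivative
         (\<Sum>c<d j. - grad t (Suc j) a c * ?U $$ (b,c) + - grad t (Suc j) b c * ?U $$ (a,c)))
        (at t within {0..})"
    by (intro DERIV_sum) auto
  moreover have "(\<Sum>c<d (Suc (Suc j)). - grad t (Suc (Suc j)) c a * ?V $$ (c,b) + - grad t (Suc (Suc j)) c b * ?V $$ (c,a))
      = (\<Sum>c<d j. - grad t (Suc j) a c * ?U $$ (b,c) + - grad t (Suc j) b c * ?U $$ (a,c))"
    using grad_tmult_next_layer[OF t j] grad_mult_prev_layer[OF t j] a b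
    by (simp add: sum_subtractf sum_negf)
  ultimately show ?thesis
    unfolding gram_gap_def using DERIV_diff by fastforce
qed

lemma gram_gap_const:
  "t \<ge> 0 \<Longrightarrow> Suc (Suc j) \<le> L \<Longrightarrow> a < d (Suc j) \<Longrightarrow> b < d (Suc j) \<Longrightarrow> gram_gap t j a b = gram_gap 0 j a b"
  using const_halfline_if_deriv_zero[of "\<lambda>s. gram_gap s j a b"] has_deriv_gram_gap by blast

definition layer_sq :: "real \<Rightarrow> nat \<Rightarrow> real" where
  "layer_sq t j = frob_sq (d j) (d (j - 1)) (\<lambda>a b. W t j $$ (a,b))"

lemma layer_sq_nonneg: "layer_sq t j \<ge> 0"
  unfolding layer_sq_def by (rule frob_sq_nonneg)

lemma layer_sq_diff_const:
  assumes t: "t \<ge> 0" and j: "Suc (Suc j) \<le> L"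
  shows "layer_sq t (Suc (Suc j)) - layer_sq t (Suc j) = layer_sq 0 (Suc (Suc j)) - layer_sq 0 (Suc j)"
proof -
  have trace: "(\<Sum>a<d (Suc j). gram_gap s j a a) = layer_sq s (Suc (Suc j)) - layer_sq s (Suc j)" for s
    unfolding gram_gap_def layer_sq_def frob_sq_def
    by (simp add: sum_subtractf power2_eq_square sum.swap[of _ "{..<d (Suc j)}"])
  show ?thesis using trace[of t] trace[of 0] gram_gap_const[OF t j] by simp
qed

lemma layer_sq_eq_last:
  assumes t: "t \<ge> 0" and j: "j \<in> {1..L}"
  shows "layer_sq t j = layer_sq t L + (layer_sq 0 j - layer_sq 0 L)"
proof -
  have "j \<le> L" using j by simp
  thus ?thesis using j
  proof (induction j rule: inc_induct)
    case (step j)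
    then obtain i where i: "j = Suc i" by (cases j) auto
    thus ?case using step layer_sq_diff_const[OF t, of i] by simp
  qed simp
qed

lemma sqnorm_tapply_eq_next_layer:
  assumes t: "t \<ge> 0" and j: "Suc (Suc j) \<le> L"
  shows "sqnorm (d j) (\<lambda>c. \<Sum>a<d (Suc j). W t (Suc j) $$ (a,c) * x a) =
         sqnorm (d (Suc (Suc j))) (\<lambda>c. \<Sum>a<d (Suc j). W t (Suc (Suc j)) $$ (c,a) * x a)
         - (\<Sum>a<d (Suc j). \<Sum>b<d (Suc j). x a * x b * gram_gap 0 j a b)"
proof -
  have "(\<Sum>a<d (Suc j). \<Sum>b<d (Suc j). x a * x b * gram_gap 0 j a b) =
        (\<Sum>a<d (Suc j). \<Sum>b<d (Suc j). x a * x b * gram_gap t j a b)"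
    using gram_gap_const[OF t j] by (intro sum.cong refl) simp
  thus ?thesis
    unfolding sqnorm_apply_eq_quadratic_form gram_gap_def
    by (simp add: right_diff_distrib sum_subtractf)
qed

lemma risk_W_nonneg: "t \<ge> 0 \<Longrightarrow> R (W t) \<ge> 0"
  using risk_W loss_pos k_pos by (simp add: sum_nonneg less_imp_le)

lemma loss_strict_antimono: "x < y \<Longrightarrow> loss y < loss x"
  by (rule DERIV_neg_imp_decreasing) (use loss_deriv loss'_neg in auto)

text \<open>Because \<open>R(W(t)) \<le> R(W(0)) < \<ell>(0)\<close> and \<open>\<ell>\<close> is decreasing.\<close>
lemma margin_bounded_away:
  obtains \<delta> where "\<delta> > 0" "\<And>t. t \<ge> 0 \<Longrightarrow> \<exists>i<k. margin t i > \<delta>"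
proof -
  have "(loss \<longlongrightarrow> loss 0) (at 0)" using DERIV_isCont[OF loss_deriv] by (simp add: isCont_def)
  then obtain s where s: "s > 0" "\<And>x. x \<noteq> 0 \<Longrightarrow> norm (x - 0) < s \<Longrightarrow> norm (loss x - loss 0) < loss 0 - R (W 0)"
    using init unfolding LIM_eq by (metis diff_gt_0_iff_gt)
  define \<delta> where "\<delta> = s / 2"
  have \<delta>: "\<delta> > 0" "loss \<delta> > R (W 0)" using s(1) s(2)[of \<delta>] unfolding \<delta>_def by auto
  have "\<exists>i<k. margin t i > \<delta>" if t: "t \<ge> 0" for t
  proof (rule ccontr)
    assume "\<not> (\<exists>i<k. margin t i > \<delta>)"
    hence "loss \<delta> \<le> loss (margin t i)" if "i < k" for i
      using that loss_strict_antimono by (metis less_eq_real_def not_less)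
    hence "real k * loss \<delta> \<le> (\<Sum>i<k. loss (margin t i))"
      using sum_mono[of "{..<k}" "\<lambda>_. loss \<delta>"] by auto
    hence "real k * loss \<delta> \<le> real k * R (W t)" using risk_W[OF t] k_pos by simp
    hence "loss \<delta> \<le> R (W t)" using k_pos by simp
    thus False using risk_antimono[of 0 t] t \<delta> by simp
  qed
  thus ?thesis using that \<delta> by blast
qed

lemma layer_sq_le_last:
  obtains C where "C \<ge> 0" "\<And>t j. t \<ge> 0 \<Longrightarrow> j \<in> {1..L} \<Longrightarrow> layer_sq t j \<le> layer_sq t L + C"
proof -
  define C where "C = (\<Sum>j\<in>{1..L}. \<bar>layer_sq 0 j - layer_sq 0 L\<bar>)"
  have "layer_sq t j \<le> layer_sq t L + C" if "t \<ge> 0" "j \<in> {1..L}" for t j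
  proof -
    have "\<bar>layer_sq 0 j - layer_sq 0 L\<bar> \<le> C"
      unfolding C_def using that(2) by (intro member_le_sum) auto
    thus ?thesis using layer_sq_eq_last[OF that] by simp
  qed
  moreover have "C \<ge> 0" unfolding C_def by (simp add: sum_nonneg)
  ultimately show ?thesis using that by blast
qed

lemma margins_bounded:
  obtains M where "M > 0" "\<And>t i. t \<ge> 0 \<Longrightarrow> layer_sq t L \<le> B \<Longrightarrow> i < k \<Longrightarrow> \<bar>margin t i\<bar> \<le> M"
proof -
  obtain C where C: "C \<ge> 0" "\<And>t j. t \<ge> 0 \<Longrightarrow> j \<in> {1..L} \<Longrightarrow> layer_sq t j \<le> layer_sq t L + C"
    using layer_sq_le_last by blast
  define Z where "Z = (\<Sum>i<k. sqnorm (d 0) (z i))"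
  have Z: "sqnorm (d 0) (z i) \<le> Z" if "i < k" for i
    unfolding Z_def using that by (intro member_le_sum) (auto simp: sqnorm_nonneg)
  define M where "M = sqrt ((\<bar>B\<bar> + C)^L * Z) + 1"
  have "\<bar>margin t i\<bar> \<le> M" if t: "t \<ge> 0" "layer_sq t L \<le> B" and i: "i < k" for t i
  proof -
    have "(\<Prod>j\<in>{Suc 0..L}. layer_sq t j) \<le> (\<Prod>j\<in>{Suc 0..L}. \<bar>B\<bar> + C)"
      using C(2)[OF t(1)] t(2) by (intro prod_mono) (force simp: layer_sq_nonneg)
    hence "sqnorm (d 0) (backward L d (W t) 0) \<le> (\<bar>B\<bar> + C)^L"
      using sqnorm_backward_le[where d=d and L=L and Ws="W t", OF d_L, of 0] by (simp add: layer_sq_def)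
    hence "(margin t i)^2 \<le> (\<bar>B\<bar> + C)^L * Z"
      using output_sq_le_input[where d=d and L=L, OF d_L, of "W t" "z i"] Z[OF i] C(1)
      unfolding margin_def by (meson mult_mono order_trans sqnorm_nonneg zero_le_power abs_ge_zero add_nonneg_nonneg)
    hence "\<bar>margin t i\<bar> \<le> sqrt ((\<bar>B\<bar> + C)^L * Z)" using real_sqrt_le_mono by fastforce
    thus ?thesis unfolding M_def by simp
  qed
  moreover have "Z \<ge> 0" unfolding Z_def by (simp add: sum_nonneg sqnorm_nonneg)
  hence "M > 0" unfolding M_def using C(1) by (simp add: add_nonneg_pos)
  ultimately show ?thesis using that by blast
qed

definition input_grad :: "real \<Rightarrow> nat \<Rightarrow> real" where
  "input_grad t b = (1 / real k) * (\<Sum>i<k. loss' (margin t i) * z i b)"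

lemma grad_sq_ge_first_layer:
  assumes t: "t \<ge> 0"
  shows "sqnorm (d 1) (backward L d (W t) 1) * sqnorm (d 0) (input_grad t) \<le> grad_sq t"
proof -
  have "(\<Sum>a<d (Suc 0). \<Sum>b<d 0. (grad t (Suc 0) a b)^2) \<le> grad_sq t"
    unfolding grad_sq_def using L_pos
    by (intro member_le_sum[where f="\<lambda>j. \<Sum>a<d (Suc j). \<Sum>b<d j. (grad t (Suc j) a b)^2"])
       (auto intro!: sum_nonneg)
  moreover have "grad t (Suc 0) a b = backward L d (W t) 1 a * input_grad t b"
    if "a < d (Suc 0)" "b < d 0" for a b
    using grad_eq[OF t _ that] L_pos by (simp add: input_grad_def sum_distrib_left mult_ac)
  hence "(\<Sum>a<d (Suc 0). \<Sum>b<d 0. (grad t (Suc 0) a b)^2) =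
         sqnorm (d 1) (backward L d (W t) 1) * sqnorm (d 0) (input_grad t)"
    unfolding sqnorm_def sum_product by (simp add: power_mult_distrib)
  ultimately show ?thesis by simp
qed

lemma backward_first_layer_bounded_below:
  obtains c where "c > 0"
    "\<And>t. t \<ge> 0 \<Longrightarrow> layer_sq t L \<le> B \<Longrightarrow> c \<le> sqnorm (d 1) (backward L d (W t) 1)"
proof -
  obtain \<delta> where \<delta>: "\<delta> > 0" "\<And>t. t \<ge> 0 \<Longrightarrow> \<exists>i<k. margin t i > \<delta>" using margin_bounded_away by blast
  obtain C where C: "C \<ge> 0" "\<And>t j. t \<ge> 0 \<Longrightarrow> j \<in> {1..L} \<Longrightarrow> layer_sq t j \<le> layer_sq t L + C"
    using layer_sq_le_last by blast
  define Z where "Z = (\<Sum>i<k. sqnorm (d 0) (z i))"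
  have Z: "sqnorm (d 0) (z i) \<le> Z" if "i < k" for i
    unfolding Z_def using that by (intro member_le_sum) (auto simp: sqnorm_nonneg)
  define D where "D = (\<bar>B\<bar> + C) * Z + 1"
  have D: "D > 0" unfolding D_def using C(1) sqnorm_nonneg by (simp add: Z_def sum_nonneg add_nonneg_pos)
  have "\<delta>^2 / D \<le> sqnorm (d 1) (backward L d (W t) 1)" if t: "t \<ge> 0" "layer_sq t L \<le> B" for t
  proof -
    obtain i where i: "i < k" "margin t i > \<delta>" using \<delta>(2)[OF t(1)] by blast
    have "layer_sq t 1 \<le> \<bar>B\<bar> + C" using C(2)[OF t(1), of 1] L_pos t(2) by simp
    hence "layer_sq t 1 * sqnorm (d 0) (z i) \<le> D"
      using Z[OF i(1)] C(1) unfolding D_def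
      by (smt (verit, best) layer_sq_nonneg mult_mono sqnorm_nonneg)
    moreover have "\<delta>^2 < (margin t i)^2" using i \<delta> by (intro power_strict_mono) auto
    moreover have "(margin t i)^2 \<le> sqnorm (d 1) (backward L d (W t) 1) * (layer_sq t 1 * sqnorm (d 0) (z i))"
      using output_sq_le_first_layer[where d=d and L=L, OF d_L L_pos, of "W t" "z i"]
      unfolding margin_def layer_sq_def by simp
    ultimately have "\<delta>^2 \<le> sqnorm (d 1) (backward L d (W t) 1) * D"
      by (smt (verit) mult_left_mono sqnorm_nonneg)
    thus ?thesis using D by (simp add: divide_le_eq)
  qed
  thus ?thesis using that[of "\<delta>^2 / D"] \<delta> D by auto
qed

text \<open>Along a separating direction \<open>ub\<close> every summand of \<open>input_grad t\<close> has the same sign, so it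
  cannot be small while the margins (hence the \<open>\<ell>'\<close>-weights) are bounded.\<close>
lemma input_grad_bounded_below:
  obtains c where "c > 0"
    "\<And>t. t \<ge> 0 \<Longrightarrow> layer_sq t L \<le> B \<Longrightarrow> c \<le> sqnorm (d 0) (input_grad t)"
proof -
  obtain ub where ub: "\<And>i. i < k \<Longrightarrow> (\<Sum>b<d 0. z i b * ub b) > 0" using separable by blast
  define \<gamma> where "\<gamma> i = (\<Sum>b<d 0. z i b * ub b)" for i
  define \<Gamma> where "\<Gamma> = (\<Sum>i<k. \<gamma> i)"
  have \<Gamma>: "\<Gamma> > 0" unfolding \<Gamma>_def \<gamma>_def by (rule sum_pos) (use ub k_pos in auto)
  have "0 < (\<gamma> 0)^2" using ub[OF k_pos] unfolding \<gamma>_def by simp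
  also have "\<dots> \<le> sqnorm (d 0) (z 0) * sqnorm (d 0) ub"
    unfolding \<gamma>_def by (rule cauchy_schwarz_sqnorm)
  finally have ub_pos: "sqnorm (d 0) ub > 0"
    using sqnorm_nonneg[of "d 0" ub] by (cases "sqnorm (d 0) ub = 0") auto
  obtain M where M: "\<And>t i. t \<ge> 0 \<Longrightarrow> layer_sq t L \<le> B \<Longrightarrow> i < k \<Longrightarrow> \<bar>margin t i\<bar> \<le> M"
    using margins_bounded by blast
  obtain lam Lam where lam: "lam > 0" "\<And>x. \<bar>x\<bar> \<le> M \<Longrightarrow> - Lam \<le> loss' x \<and> loss' x \<le> - lam"
    using continuous_neg_bounded_on_interval[OF loss'_cont loss'_neg] by blast
  define c where "c = (lam * \<Gamma> / real k)^2 / sqnorm (d 0) ub"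
  have "c \<le> sqnorm (d 0) (input_grad t)" if t: "t \<ge> 0" "layer_sq t L \<le> B" for t
  proof -
    have "(\<Sum>b<d 0. input_grad t b * ub b) =
          (1 / real k) * (\<Sum>b<d 0. \<Sum>i<k. loss' (margin t i) * (z i b * ub b))"
      unfolding input_grad_def by (simp add: sum_distrib_left sum_distrib_right mult_ac)
    also have "\<dots> = (1 / real k) * (\<Sum>i<k. loss' (margin t i) * \<gamma> i)"
      unfolding \<gamma>_def by (subst sum.swap) (simp add: sum_distrib_left)
    also have "\<dots> \<le> (1 / real k) * (\<Sum>i<k. - lam * \<gamma> i)"
      using lam(2)[OF M[OF t]] ub unfolding \<gamma>_def
      by (intro mult_left_mono sum_mono mult_right_mono) (auto intro: less_imp_le)
    also have "\<dots> = - (lam * \<Gamma> / real k)"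
      unfolding \<Gamma>_def by (simp add: sum_distrib_left sum_negf sum_divide_distrib)
    finally have "lam * \<Gamma> / real k \<le> - (\<Sum>b<d 0. input_grad t b * ub b)" by simp
    hence "(lam * \<Gamma> / real k)^2 \<le> (- (\<Sum>b<d 0. input_grad t b * ub b))^2"
      using lam(1) \<Gamma> by (intro power_mono) auto
    hence "(lam * \<Gamma> / real k)^2 \<le> (\<Sum>b<d 0. input_grad t b * ub b)^2" by simp
    also have "\<dots> \<le> sqnorm (d 0) (input_grad t) * sqnorm (d 0) ub" by (rule cauchy_schwarz_sqnorm)
    finally show ?thesis unfolding c_def using ub_pos by (simp add: divide_le_eq)
  qed
  moreover have "c > 0" unfolding c_def using lam \<Gamma> k_pos ub_pos by simp
  ultimately show ?thesis using that by blast
qed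

lemma grad_sq_bounded_below:
  obtains c where "c > 0" "\<And>t. t \<ge> 0 \<Longrightarrow> layer_sq t L \<le> B \<Longrightarrow> c \<le> grad_sq t"
proof -
  obtain c1 where c1: "c1 > 0" "\<And>t. t \<ge> 0 \<Longrightarrow> layer_sq t L \<le> B \<Longrightarrow> c1 \<le> sqnorm (d 1) (backward L d (W t) 1)"
    using backward_first_layer_bounded_below by blast
  obtain c2 where c2: "c2 > 0" "\<And>t. t \<ge> 0 \<Longrightarrow> layer_sq t L \<le> B \<Longrightarrow> c2 \<le> sqnorm (d 0) (input_grad t)"
    using input_grad_bounded_below by blast
  have "c1 * c2 \<le> grad_sq t" if "t \<ge> 0" "layer_sq t L \<le> B" for t
    using mult_mono[OF c1(2)[OF that] c2(2)[OF that]] c1(1) c2(1) grad_sq_ge_first_layer[OF that(1)]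
    by (simp add: sqnorm_nonneg)
  thus ?thesis using that[of "c1 * c2"] c1 c2 by simp
qed

lemma has_deriv_layer_sq_last:
  assumes t: "t \<ge> 0"
  shows "((\<lambda>s. layer_sq s L) has_real_derivative - (2 / real k) * (\<Sum>i<k. loss' (margin t i) * margin t i))
           (at t within {0..})"
proof -
  obtain l where l: "L = Suc l" using L_pos by (cases L) auto
  have eq: "layer_sq s L = (\<Sum>b<d l. W s (Suc l) $$ (0,b) * W s (Suc l) $$ (0,b))" for s
    unfolding layer_sq_def frob_sq_def using d_L l by (simp add: power2_eq_square)
  have "((\<lambda>s. \<Sum>b<d l. W s (Suc l) $$ (0,b) * W s (Suc l) $$ (0,b)) has_real_derivative
        (\<Sum>b<d l. - 2 * (W t (Suc l) $$ (0,b) * grad t (Suc l) 0 b))) (at t within {0..})"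
  proof (rule DERIV_sum)
    fix b assume "b \<in> {..<d l}"
    hence "((\<lambda>s. W s (Suc l) $$ (0,b)) has_real_derivative - grad t (Suc l) 0 b) (at t within {0..})"
      using has_deriv_W[OF t, of l 0 b] l d_L by simp
    from DERIV_mult[OF this this]
    show "((\<lambda>s. W s (Suc l) $$ (0,b) * W s (Suc l) $$ (0,b)) has_real_derivative
          - 2 * (W t (Suc l) $$ (0,b) * grad t (Suc l) 0 b)) (at t within {0..})"
      by (simp add: algebra_simps)
  qed
  moreover have "(\<Sum>b<d l. - 2 * (W t (Suc l) $$ (0,b) * grad t (Suc l) 0 b)) =
                 - (2 / real k) * (\<Sum>i<k. loss' (margin t i) * margin t i)"
  proof -
    have "(\<Sum>b<d l. - 2 * (W t (Suc l) $$ (0,b) * grad t (Suc l) 0 b)) =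
          - (2 / real k) * (\<Sum>i<k. loss' (margin t i) * (\<Sum>b<d l. W t (Suc l) $$ (0,b) * forward d (W t) (z i) l b))"
      using grad_eq[OF t, of l 0] l d_L
      by (simp add: sum_distrib_left mult_ac sum.swap[of _ "{..<d l}"])
    thus ?thesis unfolding margin_def using l by simp
  qed
  ultimately show ?thesis unfolding eq by simp
qed

lemma last_layer_speed_bounded:
  obtains K where "K > 0"
    "\<And>t. t \<ge> 0 \<Longrightarrow> layer_sq t L \<le> B \<Longrightarrow> \<bar>- (2 / real k) * (\<Sum>i<k. loss' (margin t i) * margin t i)\<bar> \<le> K"
proof -
  obtain M where M: "M > 0" "\<And>t i. t \<ge> 0 \<Longrightarrow> layer_sq t L \<le> B \<Longrightarrow> i < k \<Longrightarrow> \<bar>margin t i\<bar> \<le> M"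
    using margins_bounded by blast
  obtain lam Lam where lam: "\<And>x. \<bar>x\<bar> \<le> M \<Longrightarrow> - Lam \<le> loss' x \<and> loss' x \<le> - lam"
    using continuous_neg_bounded_on_interval[OF loss'_cont loss'_neg] by blast
  have "\<bar>- (2 / real k) * (\<Sum>i<k. loss' (margin t i) * margin t i)\<bar> \<le> 2 * \<bar>Lam\<bar> * M + 1"
    if t: "t \<ge> 0" "layer_sq t L \<le> B" for t
  proof -
    have "\<bar>loss' (margin t i) * margin t i\<bar> \<le> \<bar>Lam\<bar> * M" if "i < k" for i
      using lam[OF M(2)[OF t that]] loss'_neg[of "margin t i"] M(2)[OF t that]
      unfolding abs_mult by (intro mult_mono) auto
    hence "(\<Sum>i<k. \<bar>loss' (margin t i) * margin t i\<bar>) \<le> real k * (\<bar>Lam\<bar> * M)"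
      using sum_mono[of "{..<k}" "\<lambda>i. \<bar>loss' (margin t i) * margin t i\<bar>" "\<lambda>_. \<bar>Lam\<bar> * M"] by simp
    hence "\<bar>\<Sum>i<k. loss' (margin t i) * margin t i\<bar> \<le> real k * (\<bar>Lam\<bar> * M)"
      using sum_abs[of "\<lambda>i. loss' (margin t i) * margin t i" "{..<k}"] by linarith
    thus ?thesis using k_pos by (simp add: abs_mult field_simps)
  qed
  moreover have "2 * \<bar>Lam\<bar> * M + 1 > 0" using M(1) by (simp add: add_nonneg_pos)
  ultimately show ?thesis using that by blast
qed

lemma layer_sq_last_tendsto: "filterlim (\<lambda>t. layer_sq t L) at_top at_top"
proof (rule filterlim_at_top_if_descent[OF has_deriv_layer_sq_last has_deriv_risk risk_W_nonneg])
  show "- grad_sq t \<le> 0" for t using grad_sq_nonneg by simp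
  fix B
  obtain c where "c > 0" "\<And>t. t \<ge> 0 \<Longrightarrow> layer_sq t L \<le> B \<Longrightarrow> c \<le> grad_sq t"
    using grad_sq_bounded_below by blast
  moreover obtain K where "K > 0" "\<And>t. t \<ge> 0 \<Longrightarrow> layer_sq t L \<le> B \<Longrightarrow>
      \<bar>- (2 / real k) * (\<Sum>i<k. loss' (margin t i) * margin t i)\<bar> \<le> K"
    using last_layer_speed_bounded by blast
  ultimately show "\<exists>c>0. \<exists>K>0. \<forall>t\<ge>0. layer_sq t L \<le> B \<longrightarrow>
      - grad_sq t \<le> - c \<and> \<bar>- (2 / real k) * (\<Sum>i<k. loss' (margin t i) * margin t i)\<bar> \<le> K"
    by force
qed

lemma eventually_layer_sq_eq_last:
  "j \<in> {1..L} \<Longrightarrow> eventually (\<lambda>t. layer_sq t j = layer_sq t L + (layer_sq 0 j - layer_sq 0 L)) at_top"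
  using eventually_ge_at_top[of "0::real"] by eventually_elim (rule layer_sq_eq_last)

lemma layer_sq_tendsto: "j \<in> {1..L} \<Longrightarrow> filterlim (\<lambda>t. layer_sq t j) at_top at_top"
  using filterlim_tendsto_add_at_top[OF tendsto_const layer_sq_last_tendsto,
      of "layer_sq 0 j - layer_sq 0 L"]
  by (subst filterlim_cong[OF refl refl eventually_layer_sq_eq_last]) (auto simp: add.commute)

end

section \<open>Alignment of the layers\<close>

locale linear_net_flow_svd = linear_net_flow +
  fixes u v :: "real \<Rightarrow> nat \<Rightarrow> real vec"
  assumes top_sv: "\<And>t j. t \<ge> 0 \<Longrightarrow> j \<in> {1..L} \<Longrightarrow> top_singular_vectors (W t j) (u t j) (v t j)"
begin

definition U :: "real \<Rightarrow> nat \<Rightarrow> nat \<Rightarrow> real" where "U t j a = u t j $ a"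
definition V :: "real \<Rightarrow> nat \<Rightarrow> nat \<Rightarrow> real" where "V t j b = v t j $ b"

definition sv :: "real \<Rightarrow> nat \<Rightarrow> real" where
  "sv t j = (\<Sum>a<d j. U t j a * (\<Sum>b<d (j - 1). W t j $$ (a,b) * V t j b))"

lemma top_singular_triple:
  assumes t: "t \<ge> 0" and j: "j \<in> {1..L}"
  shows "singular_triple (W t j) (sv t j) (u t j) (v t j)"
    and "\<And>x. sqnorm (d j) (\<lambda>a. \<Sum>b<d (j - 1). W t j $$ (a,b) * x b) \<le> (sv t j)^2 * sqnorm (d (j - 1)) x"
proof -
  obtain \<sigma> where st: "singular_triple (W t j) \<sigma> (u t j) (v t j)"
    and bound: "\<And>x. sqnorm (d j) (\<lambda>a. \<Sum>b<d (j - 1). W t j $$ (a,b) * x b) \<le> \<sigma>^2 * sqnorm (d (j - 1)) x"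
    using top_singular_value_bounds_apply[OF layer_carrier[OF t j] top_sv[OF t j]] by blast
  note coords = singular_triple_coords[OF layer_carrier[OF t j] st]
  have "sv t j = (\<Sum>a<d j. \<sigma> * (U t j a)^2)"
    unfolding sv_def using coords(6) by (intro sum.cong) (auto simp: U_def V_def power2_eq_square)
  also have "\<dots> = \<sigma>" using coords(4) by (simp add: sum_distrib_left[symmetric] sqnorm_def U_def)
  finally show "singular_triple (W t j) (sv t j) (u t j) (v t j)"
    and "sqnorm (d j) (\<lambda>a. \<Sum>b<d (j - 1). W t j $$ (a,b) * x b) \<le> (sv t j)^2 * sqnorm (d (j - 1)) x" for x
    using st bound by auto
qed

lemma sv_coords:
  assumes t: "t \<ge> 0" and j: "j \<in> {1..L}"
  shows "sv t j \<ge> 0" "sqnorm (d j) (U t j) = 1" "sqnorm (d (j - 1)) (V t j) = 1"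
    "\<And>a. a < d j \<Longrightarrow> (\<Sum>b<d (j - 1). W t j $$ (a,b) * V t j b) = sv t j * U t j a"
    "\<And>b. b < d (j - 1) \<Longrightarrow> (\<Sum>a<d j. W t j $$ (a,b) * U t j a) = sv t j * V t j b"
    "u t j \<in> carrier_vec (d j)" "v t j \<in> carrier_vec (d (j - 1))"
  using singular_triple_coords[OF layer_carrier[OF t j] top_singular_triple(1)[OF t j]]
  unfolding U_def V_def by auto

lemma sqnorm_tapply_le_sv:
  "t \<ge> 0 \<Longrightarrow> j \<in> {1..L} \<Longrightarrow>
   sqnorm (d (j - 1)) (\<lambda>b. \<Sum>a<d j. W t j $$ (a,b) * x a) \<le> (sv t j)^2 * sqnorm (d j) x"
  by (rule sqnorm_tapply_le_if_apply_le) (use top_singular_triple(2) in auto)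

lemma sv_sq_le_layer_sq: "t \<ge> 0 \<Longrightarrow> j \<in> {1..L} \<Longrightarrow> (sv t j)^2 \<le> layer_sq t j"
  unfolding layer_sq_def by (rule singular_value_sq_le_frob_sq[OF sv_coords(2,3,4)]) auto

lemma sv_sq_last_layer:
  assumes t: "t \<ge> 0"
  shows "layer_sq t L \<le> (sv t L)^2"
proof -
  have L: "L \<in> {1..L}" using L_pos by simp
  define w where "w b = W t L $$ (0,b)" for b
  have F: "layer_sq t L = sqnorm (d (L - 1)) w"
    unfolding layer_sq_def frob_sq_def sqnorm_def w_def using d_L by simp
  have "(layer_sq t L)^2 = sqnorm (d L) (\<lambda>a. \<Sum>b<d (L - 1). W t L $$ (a,b) * w b)"
    unfolding F sqnorm_def w_def using d_L by (simp add: power2_eq_square)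
  also have "\<dots> \<le> (sv t L)^2 * layer_sq t L"
    using top_singular_triple(2)[OF t L] F by simp
  finally show ?thesis
    using layer_sq_nonneg[of t L] by (cases "layer_sq t L = 0") (auto simp: power2_eq_square)
qed

definition gap_bound :: "nat \<Rightarrow> real" where
  "gap_bound j = (\<Sum>a<d (Suc j). \<Sum>b<d (Suc j). \<bar>gram_gap 0 j a b\<bar>)"

text \<open>By balancedness, \<open>W(j+1)\<^sup>T\<close> stretches the top right singular vector of \<open>W(j+2)\<close>
  almost as much as \<open>W(j+2)\<close> does.\<close>
lemma sqnorm_tapply_top_right_ge:
  assumes t: "t \<ge> 0" and j: "Suc (Suc j) \<le> L"
  shows "(sv t (Suc (Suc j)))^2 - gap_bound j \<le>
           sqnorm (d j) (\<lambda>c. \<Sum>a<d (Suc j). W t (Suc j) $$ (a,c) * V t (Suc (Suc j)) a)"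
proof -
  have j2: "Suc (Suc j) \<in> {1..L}" using j by simp
  have "sqnorm (d (Suc (Suc j))) (\<lambda>c. \<Sum>a<d (Suc j). W t (Suc (Suc j)) $$ (c,a) * V t (Suc (Suc j)) a)
      = sqnorm (d (Suc (Suc j))) (\<lambda>c. sv t (Suc (Suc j)) * U t (Suc (Suc j)) c)"
    unfolding sqnorm_def using sv_coords(4)[OF t j2] by (intro sum.cong refl) simp
  also have "\<dots> = (sv t (Suc (Suc j)))^2" using sv_coords(2)[OF t j2] by (simp add: sqnorm_scale)
  finally show ?thesis
    using sqnorm_tapply_eq_next_layer[OF t j, of "V t (Suc (Suc j))"]
      abs_quadratic_form_le[of "d (Suc j)" "V t (Suc (Suc j))" "gram_gap 0 j"] sv_coords(3)[OF t j2]
    unfolding gap_bound_def by simp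
qed

lemma sv_sq_ge_layer_sq:
  assumes "j \<in> {1..L}"
  obtains C where "\<And>t. t \<ge> 0 \<Longrightarrow> layer_sq t j - C \<le> (sv t j)^2"
proof -
  have "j \<le> L" using assms by simp
  hence "\<exists>C. \<forall>t\<ge>0. layer_sq t j - C \<le> (sv t j)^2" using assms
  proof (induction j rule: inc_induct)
    case base
    show ?case using sv_sq_last_layer by (intro exI[of _ 0]) simp
  next
    case (step j)
    then obtain i where i: "j = Suc i" by (cases j) auto
    have i2: "Suc (Suc i) \<le> L" and i1: "Suc i \<in> {1..L}" using step i by auto
    obtain C where C: "\<And>t. t \<ge> 0 \<Longrightarrow> layer_sq t (Suc (Suc i)) - C \<le> (sv t (Suc (Suc i)))^2"
      using step i by auto
    have "layer_sq t (Suc i) - (C + gap_bound i - (layer_sq 0 (Suc (Suc i)) - layer_sq 0 (Suc i)))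
            \<le> (sv t (Suc i))^2" if t: "t \<ge> 0" for t
    proof -
      have "(sv t (Suc (Suc i)))^2 - gap_bound i \<le> (sv t (Suc i))^2 * sqnorm (d (Suc i)) (V t (Suc (Suc i)))"
        using sqnorm_tapply_top_right_ge[OF t i2] sqnorm_tapply_le_sv[OF t i1] by (fastforce intro: order_trans)
      thus ?thesis using sv_coords(3)[OF t, of "Suc (Suc i)"] i2 C[OF t] layer_sq_diff_const[OF t i2] by simp
    qed
    thus ?case unfolding i by blast
  qed
  thus ?thesis using that by blast
qed

lemma align_sq_ge:
  assumes j: "Suc (Suc j) \<le> L"
  obtains C where "\<And>t. t \<ge> 0 \<Longrightarrow>
    layer_sq t (Suc (Suc j)) - C \<le> (\<Sum>a<d (Suc j). U t (Suc j) a * V t (Suc (Suc j)) a)^2 * layer_sq t (Suc j)"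
proof -
  have j1: "Suc j \<in> {1..L}" and j2: "Suc (Suc j) \<in> {1..L}" using j by auto
  obtain C1 where C1: "\<And>t. t \<ge> 0 \<Longrightarrow> layer_sq t (Suc j) - C1 \<le> (sv t (Suc j))^2"
    using sv_sq_ge_layer_sq[OF j1] by blast
  obtain C2 where C2: "\<And>t. t \<ge> 0 \<Longrightarrow> layer_sq t (Suc (Suc j)) - C2 \<le> (sv t (Suc (Suc j)))^2"
    using sv_sq_ge_layer_sq[OF j2] by blast
  have "layer_sq t (Suc (Suc j)) - (C2 + gap_bound j + C1) \<le>
          (\<Sum>a<d (Suc j). U t (Suc j) a * V t (Suc (Suc j)) a)^2 * layer_sq t (Suc j)"
    if t: "t \<ge> 0" for t
  proof -
    define \<alpha> where "\<alpha> = (\<Sum>a<d (Suc j). U t (Suc j) a * V t (Suc (Suc j)) a)"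
    have "(sv t (Suc (Suc j)))^2 - gap_bound j \<le> (sv t (Suc j))^2 * \<alpha>^2 + (layer_sq t (Suc j) - (sv t (Suc j))^2)"
      using sqnorm_tapply_top_right_ge[OF t j]
        sqnorm_tapply_le_split[OF sv_coords(2,3,4)[OF t j1], of "V t (Suc (Suc j))"] sv_coords(3)[OF t j2]
      unfolding \<alpha>_def layer_sq_def by simp
    moreover have "(sv t (Suc j))^2 * \<alpha>^2 \<le> layer_sq t (Suc j) * \<alpha>^2"
      using sv_sq_le_layer_sq[OF t j1] by (intro mult_right_mono) auto
    ultimately show ?thesis using C1[OF t] C2[OF t] unfolding \<alpha>_def by (simp add: mult.commute)
  qed
  thus ?thesis using that by blast
qed

lemma sv_ratio_tendsto:
  assumes j: "j \<in> {1..L}"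
  shows "((\<lambda>t. sv t j / sqrt (layer_sq t j)) \<longlongrightarrow> 1) at_top"
proof -
  obtain C where C: "\<And>t. t \<ge> 0 \<Longrightarrow> layer_sq t j - C \<le> (sv t j)^2"
    using sv_sq_ge_layer_sq[OF j] by blast
  define c where "c = layer_sq 0 j - layer_sq 0 L"
  have "((\<lambda>t. (sv t j)^2 / layer_sq t j) \<longlongrightarrow> 1) at_top"
  proof (rule tendsto_1_squeeze[OF layer_sq_last_tendsto, of "c - C" c])
    show "eventually (\<lambda>t. (layer_sq t L + (c - C)) / (layer_sq t L + c) \<le> (sv t j)^2 / layer_sq t j) at_top"
      using eventually_ge_at_top[of 0] eventually_layer_sq_eq_last[OF j]
        layer_sq_tendsto[OF j, unfolded filterlim_at_top, rule_format, of 1]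
    proof eventually_elim
      case (elim t)
      have "(layer_sq t L + (c - C)) / (layer_sq t L + c) = (layer_sq t j - C) / layer_sq t j"
        unfolding c_def elim(2) by (simp add: algebra_simps)
      also have "\<dots> \<le> (sv t j)^2 / layer_sq t j"
        using C[OF elim(1)] elim(3) by (intro divide_right_mono) auto
      finally show ?case .
    qed
    show "eventually (\<lambda>t. (sv t j)^2 / layer_sq t j \<le> 1) at_top"
      using eventually_ge_at_top[of 0]
    proof eventually_elim
      case (elim t)
      show ?case
        using sv_sq_le_layer_sq[OF elim j] layer_sq_nonneg[of t j]
        by (cases "layer_sq t j = 0") (auto simp: divide_le_eq_1)
    qed
  qed
  hence "((\<lambda>t. sqrt ((sv t j)^2 / layer_sq t j)) \<longlongrightarrow> 1) at_top"
    using tendsto_real_sqrt by fastforce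
  moreover have "eventually (\<lambda>t. sqrt ((sv t j)^2 / layer_sq t j) = sv t j / sqrt (layer_sq t j)) at_top"
    using eventually_ge_at_top[of 0]
    by eventually_elim (use sv_coords(1) j in \<open>simp add: real_sqrt_divide\<close>)
  ultimately show ?thesis by (simp add: tendsto_cong)
qed

lemma align_tendsto:
  assumes j: "Suc (Suc j) \<le> L"
  shows "((\<lambda>t. \<bar>\<Sum>a<d (Suc j). U t (Suc j) a * V t (Suc (Suc j)) a\<bar>) \<longlongrightarrow> 1) at_top"
proof -
  have j1: "Suc j \<in> {1..L}" and j2: "Suc (Suc j) \<in> {1..L}" using j by auto
  define \<alpha> where "\<alpha> t = (\<Sum>a<d (Suc j). U t (Suc j) a * V t (Suc (Suc j)) a)" for t
  obtain C where C: "\<And>t. t \<ge> 0 \<Longrightarrow> layer_sq t (Suc (Suc j)) - C \<le> (\<alpha> t)^2 * layer_sq t (Suc j)"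
    using align_sq_ge[OF j] unfolding \<alpha>_def by blast
  define c1 where "c1 = layer_sq 0 (Suc j) - layer_sq 0 L"
  define c2 where "c2 = layer_sq 0 (Suc (Suc j)) - layer_sq 0 L"
  have "((\<lambda>t. (\<alpha> t)^2) \<longlongrightarrow> 1) at_top"
  proof (rule tendsto_1_squeeze[OF layer_sq_last_tendsto, of "c2 - C" c1])
    show "eventually (\<lambda>t. (layer_sq t L + (c2 - C)) / (layer_sq t L + c1) \<le> (\<alpha> t)^2) at_top"
      using eventually_ge_at_top[of 0] eventually_layer_sq_eq_last[OF j1] eventually_layer_sq_eq_last[OF j2]
        layer_sq_tendsto[OF j1, unfolded filterlim_at_top, rule_format, of 1]
    proof eventually_elim
      case (elim t)
      have "(layer_sq t L + (c2 - C)) / (layer_sq t L + c1) = (layer_sq t (Suc (Suc j)) - C) / layer_sq t (Suc j)"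
        unfolding c1_def c2_def elim(2,3) by (simp add: algebra_simps)
      also have "\<dots> \<le> (\<alpha> t)^2"
        using C[OF elim(1)] elim(4) by (simp add: pos_divide_le_eq)
      finally show ?case .
    qed
    show "eventually (\<lambda>t. (\<alpha> t)^2 \<le> 1) at_top"
      using eventually_ge_at_top[of 0]
    proof eventually_elim
      case (elim t)
      have "\<bar>\<alpha> t\<bar> \<le> 1"
        unfolding \<alpha>_def using abs_inner_le_1 sv_coords(2)[OF elim j1] sv_coords(3)[OF elim j2] by simp
      thus ?case by (simp add: abs_square_le_1)
    qed
  qed
  hence "((\<lambda>t. sqrt ((\<alpha> t)^2)) \<longlongrightarrow> 1) at_top" using tendsto_real_sqrt by fastforce
  thus ?thesis unfolding \<alpha>_def by simp
qed

lemma frob_norm_layer: "t \<ge> 0 \<Longrightarrow> j \<in> {1..L} \<Longrightarrow> frob_norm (W t j) = sqrt (layer_sq t j)"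
  using layer_carrier unfolding frob_norm_def layer_sq_def frob_sq_def by fastforce

lemma frob_norm_normalized_minus_outer:
  assumes t: "t \<ge> 0" and j: "j \<in> {1..L}" and pos: "layer_sq t j > 0"
  shows "frob_norm ((1 / frob_norm (W t j)) \<cdot>\<^sub>m W t j - outer_prod (u t j) (v t j)) =
         sqrt (2 - 2 * (sv t j / sqrt (layer_sq t j)))"
proof -
  define F where "F = sqrt (layer_sq t j)"
  have F: "F > 0" "F^2 = layer_sq t j" unfolding F_def using pos by auto
  have Wc: "W t j \<in> carrier_mat (d j) (d (j - 1))" by (rule layer_carrier[OF t j])
  have uc: "u t j \<in> carrier_vec (d j)" and vc: "v t j \<in> carrier_vec (d (j - 1))"
    using sv_coords(6,7)[OF t j] .
  define M where "M = (1 / F) \<cdot>\<^sub>m W t j - outer_prod (u t j) (v t j)"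
  have dims: "dim_row M = d j" "dim_col M = d (j - 1)"
    unfolding M_def outer_prod_def using uc vc by auto
  have "M $$ (a,b) = (W t j $$ (a,b) - F * U t j a * V t j b) / F" if "a < d j" "b < d (j - 1)" for a b
    unfolding M_def outer_prod_def U_def V_def using that Wc uc vc F by (auto simp: field_simps)
  hence "frob_sq (d j) (d (j - 1)) (\<lambda>a b. M $$ (a,b)) =
         frob_sq (d j) (d (j - 1)) (\<lambda>a b. W t j $$ (a,b) - F * U t j a * V t j b) / F^2"
    unfolding frob_sq_def by (simp add: power_divide sum_divide_distrib)
  also have "\<dots> = (layer_sq t j - 2 * F * sv t j + F^2) / F^2"
    unfolding layer_sq_def by (subst frob_sq_minus_rank1[OF sv_coords(2,3,4)[OF t j]]) auto
  also have "\<dots> = 2 - 2 * (sv t j / F)"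
    unfolding F(2)[symmetric] using F(1) by (simp add: field_simps power2_eq_square)
  finally show ?thesis
    using frob_norm_layer[OF t j] dims unfolding M_def F_def frob_norm_def frob_sq_def by simp
qed

theorem layer_rank1_tendsto:
  assumes j: "j \<in> {1..L}"
  shows "((\<lambda>t. frob_norm ((1 / frob_norm (W t j)) \<cdot>\<^sub>m W t j - outer_prod (u t j) (v t j))) \<longlongrightarrow> 0) at_top"
proof -
  have "((\<lambda>t. sqrt (2 - 2 * (sv t j / sqrt (layer_sq t j)))) \<longlongrightarrow> sqrt (2 - 2 * 1)) at_top"
    by (intro tendsto_intros sv_ratio_tendsto[OF j])
  moreover have "eventually (\<lambda>t. sqrt (2 - 2 * (sv t j / sqrt (layer_sq t j))) =
      frob_norm ((1 / frob_norm (W t j)) \<cdot>\<^sub>m W t j - outer_prod (u t j) (v t j))) at_top"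
    using eventually_ge_at_top[of 0] layer_sq_tendsto[OF j, unfolded filterlim_at_top, rule_format, of 1]
    by eventually_elim (simp add: frob_norm_normalized_minus_outer[OF _ j])
  ultimately show ?thesis by (simp add: tendsto_cong)
qed

fun normalized_forward :: "real \<Rightarrow> nat \<Rightarrow> nat \<Rightarrow> real" where
  "normalized_forward t 0 = V t 1"
| "normalized_forward t (Suc j) =
     (\<lambda>a. (\<Sum>c<d j. W t (Suc j) $$ (a,c) * normalized_forward t j c) / sqrt (layer_sq t (Suc j)))"

lemma normalized_forward_eq:
  "normalized_forward t j a = forward d (W t) (V t 1) j a / (\<Prod>i\<in>{1..j}. sqrt (layer_sq t i))"
proof (induction j arbitrary: a)
  case (Suc j)
  thus ?case by (simp add: sum_divide_distrib prod.cl_ivl_Suc mult.commute)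
qed simp

lemma sqnorm_normalized_forward_le: "t \<ge> 0 \<Longrightarrow> j \<le> L \<Longrightarrow> sqnorm (d j) (normalized_forward t j) \<le> 1"
proof (induction j)
  case 0
  thus ?case using sv_coords(3)[OF 0(1), of 1] L_pos by simp
next
  case (Suc j)
  show ?case
  proof (cases "layer_sq t (Suc j) = 0")
    case False
    hence pos: "layer_sq t (Suc j) > 0" using layer_sq_nonneg[of t "Suc j"] by simp
    have "sqnorm (d (Suc j)) (normalized_forward t (Suc j)) =
          sqnorm (d (Suc j)) (\<lambda>a. \<Sum>c<d j. W t (Suc j) $$ (a,c) * normalized_forward t j c) / layer_sq t (Suc j)"
      unfolding sqnorm_def normalized_forward.simps power_divide real_sqrt_pow2[OF less_imp_le[OF pos]]
      by (simp add: sum_divide_distrib)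
    also have "\<dots> \<le> layer_sq t (Suc j) * sqnorm (d j) (normalized_forward t j) / layer_sq t (Suc j)"
      using sqnorm_apply_le_frob_sq pos unfolding layer_sq_def by (intro divide_right_mono) auto
    also have "\<dots> \<le> 1" using pos Suc by simp
    finally show ?thesis .
  qed (simp add: sqnorm_def)
qed

lemma normalized_forward_inner_left:
  assumes t: "t \<ge> 0" and j: "Suc j \<le> L"
  shows "(\<Sum>a<d (Suc j). normalized_forward t (Suc j) a * U t (Suc j) a) =
         sv t (Suc j) / sqrt (layer_sq t (Suc j)) * (\<Sum>c<d j. normalized_forward t j c * V t (Suc j) c)"
proof -
  have "(\<Sum>a<d (Suc j). normalized_forward t (Suc j) a * U t (Suc j) a) =
        (\<Sum>c<d j. normalized_forward t j c * (\<Sum>a<d (Suc j). W t (Suc j) $$ (a,c) * U t (Suc j) a))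
          / sqrt (layer_sq t (Suc j))"
    by (simp add: sum_divide_distrib sum_distrib_left sum_distrib_right mult_ac sum.swap[of _ "{..<d j}"])
  also have "\<dots> = (\<Sum>c<d j. normalized_forward t j c * (sv t (Suc j) * V t (Suc j) c)) / sqrt (layer_sq t (Suc j))"
    using sv_coords(5)[OF t, of "Suc j"] j by simp
  finally show ?thesis by (simp add: sum_distrib_left sum_divide_distrib mult_ac)
qed

lemma normalized_forward_left_tendsto:
  assumes j: "Suc j \<le> L"
    and prev: "((\<lambda>t. \<bar>\<Sum>c<d j. normalized_forward t j c * V t (Suc j) c\<bar>) \<longlongrightarrow> 1) at_top"
  shows "((\<lambda>t. \<bar>\<Sum>a<d (Suc j). normalized_forward t (Suc j) a * U t (Suc j) a\<bar>) \<longlongrightarrow> 1) at_top"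
proof -
  have j1: "Suc j \<in> {1..L}" using j by simp
  have "((\<lambda>t. sv t (Suc j) / sqrt (layer_sq t (Suc j)) * \<bar>\<Sum>c<d j. normalized_forward t j c * V t (Suc j) c\<bar>)
          \<longlongrightarrow> 1 * 1) at_top"
    by (rule tendsto_mult[OF sv_ratio_tendsto[OF j1] prev])
  moreover have "eventually (\<lambda>t. sv t (Suc j) / sqrt (layer_sq t (Suc j)) *
       \<bar>\<Sum>c<d j. normalized_forward t j c * V t (Suc j) c\<bar> =
       \<bar>\<Sum>a<d (Suc j). normalized_forward t (Suc j) a * U t (Suc j) a\<bar>) at_top"
    using eventually_ge_at_top[of 0]
  proof eventually_elim
    case (elim t)
    have "sv t (Suc j) / sqrt (layer_sq t (Suc j)) \<ge> 0"
      using sv_coords(1)[OF elim j1] layer_sq_nonneg by (simp add: divide_nonneg_nonneg)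
    thus ?case using normalized_forward_inner_left[OF elim j] by (metis abs_mult abs_of_nonneg)
  qed
  ultimately show ?thesis by (simp add: tendsto_cong)
qed

text \<open>By induction on \<open>j\<close>: \<open>W(j+1)\<close> maps the normalised vector nearly onto its top left
  singular vector \<open>u\<^sub>j\<^sub>+\<^sub>1\<close>, which is nearly parallel to \<open>v\<^sub>j\<^sub>+\<^sub>2\<close>.\<close>
lemma normalized_forward_align_tendsto:
  "Suc j \<le> L \<Longrightarrow> ((\<lambda>t. \<bar>\<Sum>c<d j. normalized_forward t j c * V t (Suc j) c\<bar>) \<longlongrightarrow> 1) at_top"
proof (induction j)
  case 0
  have "eventually (\<lambda>t. \<bar>\<Sum>c<d 0. normalized_forward t 0 c * V t (Suc 0) c\<bar> = 1) at_top"
    using eventually_ge_at_top[of 0]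
  proof eventually_elim
    case (elim t)
    have "sqnorm (d 0) (V t 1) = 1" using sv_coords(3)[OF elim, of 1] L_pos by simp
    thus ?case by (simp add: sqnorm_def power2_eq_square)
  qed
  thus ?case by (rule tendsto_eventually)
next
  case (Suc j)
  have jL: "Suc j \<le> L" and j1: "Suc j \<in> {1..L}" and j2: "Suc (Suc j) \<in> {1..L}" using Suc.prems by auto
  define \<beta> where "\<beta> t = (\<Sum>a<d (Suc j). normalized_forward t (Suc j) a * U t (Suc j) a)" for t
  have \<beta>: "((\<lambda>t. \<bar>\<beta> t\<bar>) \<longlongrightarrow> 1) at_top"
    unfolding \<beta>_def by (rule normalized_forward_left_tendsto[OF jL Suc.IH[OF jL]])
  have "((\<lambda>t. sqrt (1 - \<bar>\<beta> t\<bar>^2)) \<longlongrightarrow> sqrt (1 - 1^2)) at_top"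
    by (intro tendsto_real_sqrt tendsto_diff tendsto_const tendsto_power \<beta>)
  hence "((\<lambda>t. \<bar>\<beta> t\<bar> * \<bar>\<Sum>a<d (Suc j). U t (Suc j) a * V t (Suc (Suc j)) a\<bar> - sqrt (1 - (\<beta> t)^2))
          \<longlongrightarrow> 1 * 1 - sqrt (1 - 1^2)) at_top"
    by (intro tendsto_diff tendsto_mult \<beta> align_tendsto[OF Suc.prems]) simp
  hence lower_lim: "((\<lambda>t. \<bar>\<beta> t\<bar> * \<bar>\<Sum>a<d (Suc j). U t (Suc j) a * V t (Suc (Suc j)) a\<bar>
      - sqrt (1 - (\<beta> t)^2)) \<longlongrightarrow> 1) at_top"
    by simp
  have V: "sqnorm (d (Suc j)) (V t (Suc (Suc j))) = 1" if "t \<ge> 0" for t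
    using sv_coords(3)[OF that j2] by simp
  have lower: "eventually (\<lambda>t. \<bar>\<beta> t\<bar> * \<bar>\<Sum>a<d (Suc j). U t (Suc j) a * V t (Suc (Suc j)) a\<bar> - sqrt (1 - (\<beta> t)^2)
      \<le> \<bar>\<Sum>c<d (Suc j). normalized_forward t (Suc j) c * V t (Suc (Suc j)) c\<bar>) at_top"
    using eventually_ge_at_top[of 0] unfolding \<beta>_def
    by eventually_elim
      (rule abs_inner_ge_via_unit[OF sqnorm_normalized_forward_le[OF _ jL] sv_coords(2)[OF _ j1] V])
  have upper: "eventually (\<lambda>t. \<bar>\<Sum>c<d (Suc j). normalized_forward t (Suc j) c * V t (Suc (Suc j)) c\<bar> \<le> 1) at_top"
    using eventually_ge_at_top[of 0]
    by eventually_elim (rule abs_inner_le_1[OF sqnorm_normalized_forward_le[OF _ jL] V])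
  show ?case by (rule tendsto_sandwich[OF lower upper lower_lim tendsto_const])
qed

lemma normalized_output_tendsto: "((\<lambda>t. \<bar>normalized_forward t L 0\<bar>) \<longlongrightarrow> 1) at_top"
proof -
  obtain l where l: "L = Suc l" using L_pos by (cases L) auto
  have L: "L \<in> {1..L}" using L_pos by simp
  have "((\<lambda>t. \<bar>\<Sum>a<d L. normalized_forward t L a * U t L a\<bar>) \<longlongrightarrow> 1) at_top"
    using normalized_forward_left_tendsto[of l] normalized_forward_align_tendsto[of l] l by simp
  moreover have "eventually (\<lambda>t. \<bar>\<Sum>a<d L. normalized_forward t L a * U t L a\<bar> = \<bar>normalized_forward t L 0\<bar>) at_top"
    using eventually_ge_at_top[of 0]
  proof eventually_elim
    case (elim t)
    have "(U t L 0)^2 = 1" using sv_coords(2)[OF elim L] d_L by (simp add: sqnorm_def)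
    hence "\<bar>U t L 0\<bar> = 1" by (simp add: abs_square_eq_1)
    thus ?case using d_L by (simp add: abs_mult)
  qed
  ultimately show ?thesis by (simp add: tendsto_cong)
qed

lemma normalized_output_eq:
  assumes t: "t \<ge> 0"
  shows "\<bar>(1 / (\<Prod>j\<in>{1..L}. frob_norm (W t j))) * (row (prod_layers d (W t) L) 0 \<bullet> v t 1)\<bar> =
         \<bar>normalized_forward t L 0\<bar>"
proof -
  have vc: "v t 1 \<in> carrier_vec (d 0)" using sv_coords(7)[OF t, of 1] L_pos by simp
  have "row (prod_layers d (W t) L) 0 \<bullet> v t 1 = (prod_layers d (W t) L *\<^sub>v v t 1) $ 0"
    using prod_layers_carrier[OF weights_dims_W[OF t], of L] d_L by simp
  also have "\<dots> = forward d (W t) (V t 1) L 0"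
    using prod_layers_mult_vec[OF weights_dims_W[OF t] vc, of L] d_L unfolding V_def by simp
  finally have "row (prod_layers d (W t) L) 0 \<bullet> v t 1 = forward d (W t) (V t 1) L 0" .
  moreover have "(\<Prod>j\<in>{1..L}. frob_norm (W t j)) = (\<Prod>j\<in>{1..L}. sqrt (layer_sq t j))"
    using frob_norm_layer[OF t] by (intro prod.cong) auto
  ultimately show ?thesis by (simp add: normalized_forward_eq)
qed

theorem output_alignment_tendsto:
  "((\<lambda>t. \<bar>(1 / (\<Prod>j\<in>{1..L}. frob_norm (W t j))) * (row (prod_layers d (W t) L) 0 \<bullet> v t 1)\<bar>) \<longlongrightarrow> 1) at_top"
proof (rule Lim_transform_eventually[OF normalized_output_tendsto])
  show "eventually (\<lambda>t. \<bar>normalized_forward t L 0\<bar> =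
      \<bar>(1 / (\<Prod>j\<in>{1..L}. frob_norm (W t j))) * (row (prod_layers d (W t) L) 0 \<bullet> v t 1)\<bar>) at_top"
    using eventually_ge_at_top[of 0] by eventually_elim (rule normalized_output_eq[symmetric])
qed

end

section \<open>Linear message passing networks\<close>

lemma agg_feat_carrier: "X \<in> carrier_mat d0 nn \<Longrightarrow> agg_feat L nn E X \<in> carrier_vec d0"
  unfolding agg_feat_def carrier_vec_def by auto

lemma agg_feat_smult: "X \<in> carrier_mat d0 nn \<Longrightarrow> agg_feat L nn E (c \<cdot>\<^sub>m X) = c \<cdot>\<^sub>v agg_feat L nn E X"
  unfolding agg_feat_def adj_mat'_def ones_vec_def
  by (auto intro!: eq_vecI simp: scalar_prod_def sum_distrib_left algebra_simps)

lemma risk_eq_forward: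
  assumes wd: "weights_dims L d Ws" and d_L: "d L = 1" and X: "\<forall>i<k. X i \<in> carrier_mat (d 0) (n i)"
  shows "risk loss L d k n G X y Ws = (1 / real k) *
           (\<Sum>i<k. loss (forward d Ws (\<lambda>b. agg_feat L (n i) (G i) (y i \<cdot>\<^sub>m X i) $ b) L 0))"
proof -
  have "(prod_layers d Ws L *\<^sub>v agg_feat L (n i) (G i) (y i \<cdot>\<^sub>m X i)) $ 0 =
        forward d Ws (\<lambda>b. agg_feat L (n i) (G i) (y i \<cdot>\<^sub>m X i) $ b) L 0" if "i < k" for i
  proof -
    have "agg_feat L (n i) (G i) (y i \<cdot>\<^sub>m X i) \<in> carrier_vec (d 0)"
      using X that by (intro agg_feat_carrier) auto
    from prod_layers_mult_vec[OF wd this, of L] show ?thesis using d_L by simp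
  qed
  thus ?thesis unfolding risk_def by simp
qed

lemma forward_zero_weights: "a < d (Suc j) \<Longrightarrow> forward d (zero_weights d) x (Suc j) a = 0"
  by (auto simp: zero_weights_def intro!: sum.neutral)

lemma risk_zero_weights:
  assumes "L \<ge> 1" "d L = 1" "k > 0" "\<forall>i<k. X i \<in> carrier_mat (d 0) (n i)"
  shows "risk loss L d k n G X y (zero_weights d) = loss 0"
proof -
  have "weights_dims L d (zero_weights d)" unfolding weights_dims_def zero_weights_def by auto
  moreover obtain l where "L = Suc l" using assms(1) by (cases L) auto
  ultimately show ?thesis
    using risk_eq_forward[of L d "zero_weights d"] forward_zero_weights[of 0 d l] assms by simp
qed

lemma sum_agg_feat_smult:
  assumes X: "X \<in> carrier_mat d0 nn" and ub: "ub \<in> carrier_vec d0"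
  shows "(\<Sum>b<d0. agg_feat L nn E (c \<cdot>\<^sub>m X) $ b * ub $ b) = c * (ub \<bullet> agg_feat L nn E X)"
proof -
  have a: "agg_feat L nn E X \<in> carrier_vec d0" by (rule agg_feat_carrier[OF X])
  hence "(\<Sum>b<d0. agg_feat L nn E (c \<cdot>\<^sub>m X) $ b * ub $ b) = (\<Sum>b<d0. c * (ub $ b * agg_feat L nn E X $ b))"
    by (intro sum.cong) (auto simp: agg_feat_smult[OF X])
  thus ?thesis using scalar_prod_eq_sum[OF a] by (simp add: sum_distrib_left)
qed

theorem theorem20:
  fixes L k :: nat
    and d :: "nat \<Rightarrow> nat"
    and n :: "nat \<Rightarrow> nat"
    and G :: "nat \<Rightarrow> nat \<Rightarrow> nat \<Rightarrow> bool"
    and X :: "nat \<Rightarrow> real mat"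
    and y :: "nat \<Rightarrow> real"
    and loss loss' :: "real \<Rightarrow> real"
    and W :: "real \<Rightarrow> nat \<Rightarrow> real mat"
    and u v :: "real \<Rightarrow> nat \<Rightarrow> real vec"
  assumes L_pos: "L \<ge> 1"
    and dims_pos: "\<forall>j\<le>L. d j > 0"
    and d_L: "d L = 1"
    and graphs: "\<forall>i<k. simple_graph (n i) (G i)"
    and feats: "\<forall>i<k. X i \<in> carrier_mat (d 0) (n i)"
    and labels: "\<forall>i<k. y i \<in> {-1, 1}"
    and separable: "\<exists>ub. ub \<in> carrier_vec (d 0) \<and>
                     (\<forall>i<k. y i * (ub \<bullet> agg_feat L (n i) (G i) (X i)) > 0)"
    and loss_pos: "\<forall>x. loss x > 0"
    and loss_deriv: "\<forall>x. (loss has_real_derivative loss' x) (at x)"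
    and loss'_cont: "continuous_on UNIV loss'"
    and loss'_neg: "\<forall>x. loss' x < 0"
    and loss_bot: "filterlim loss at_top at_bot"
    and loss_top: "(loss \<longlongrightarrow> 0) at_top"
    and flow: "gradient_flow L d (risk loss L d k n G X y) W"
    and init: "risk loss L d k n G X y (W 0) < risk loss L d k n G X y (zero_weights d)"
    and sing: "\<forall>t\<ge>0. \<forall>j\<in>{1..L}. top_singular_vectors (W t j) (u t j) (v t j)"
  shows "(\<forall>j\<in>{1..L}.
           ((\<lambda>t. frob_norm ((1 / frob_norm (W t j)) \<cdot>\<^sub>m W t j - outer_prod (u t j) (v t j)))
              \<longlongrightarrow> 0) at_top) \<and>
         ((\<lambda>t. \<bar>(1 / (\<Prod>j\<in>{1..L}. frob_norm (W t j))) *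
                  (row (prod_layers d (W t) L) 0 \<bullet> v t 1)\<bar>) \<longlongrightarrow> 1) at_top"
proof -
  define z where "z i b = agg_feat L (n i) (G i) (y i \<cdot>\<^sub>m X i) $ b" for i b
  have k: "k > 0" using init by (cases k) (simp_all add: risk_def)
  interpret linear_net_flow_svd L k d z loss loss' "risk loss L d k n G X y" W u v
  proof
    obtain ub where ub: "ub \<in> carrier_vec (d 0)" "\<forall>i<k. y i * (ub \<bullet> agg_feat L (n i) (G i) (X i)) > 0"
      using separable by blast
    have "(\<Sum>b<d 0. z i b * ub $ b) > 0" if "i < k" for i
      using sum_agg_feat_smult[OF feats[rule_format, OF that] ub(1)] ub(2) that unfolding z_def by simp
    thus "\<exists>ub. \<forall>i<k. (\<Sum>b<d 0. z i b * ub b) > 0" by blast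
    show "risk loss L d k n G X y Ws = (1 / real k) * (\<Sum>i<k. loss (forward d Ws (z i) L 0))"
      if "weights_dims L d Ws" for Ws
      using risk_eq_forward[OF that d_L feats] unfolding z_def by simp
    show "risk loss L d k n G X y (W 0) < loss 0"
      using init risk_zero_weights[OF L_pos d_L k feats] by simp
  qed (use L_pos d_L k loss_pos loss_deriv loss'_cont loss'_neg flow sing in auto)
  show ?thesis using layer_rank1_tendsto output_alignment_tendsto by blast
qed

end
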